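(* Let $\Omega$ be a metric space, $T_1,\dots,T_\gamma$ commuting homeomorphisms of $\Omega$, $T^n=T_1^{n_1}\cdots T_\gamma^{n_\gamma}$ for $n\in\mathbb{Z}^\gamma$, and $\mu$ a Borel measure on $\Omega$ ergodic for this $\mathbb{Z}^\gamma$-action. Let $f:\Omega\to\mathbb{R}$ be bounded and have an invariant continuity filter at every $\omega\in\Omega$, and define $H_\omega$ on $\ell^2(\mathbb{Z}^\gamma)$ by $(H_\omega u)(n)=\sum_{|m-n|=1}u(m)+f(T^n\omega)u(n)$. If $H_\omega$ has uniformly localized eigenfunctions (ULE) for all $\omega$ in a set of positive $\mu$-measure, then $H_\omega$ has homogeneous ULE in $\operatorname{supp}(\mu)$: there exist $\alpha>0$, $C>0$ independent of $\omega$ such that for every $\omega\in\operatorname{supp}(\mu)$, $H_\omega$ has a complete orthonormal set of eigenfunctions $\{\phi^\omega_n\}$ and points $m^\omega_n\in\mathbb{Z}^\gamma$ with $|\phi^\omega_n(m)|\le Ce^{-\alpha|m-m^\omega_n|}$ for all $n,m$.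
   Context: $B(\omega,\delta)$ is the open ball of radius $\delta$ about $\omega$. $f$ has an invariant continuity filter if at every $\omega\in\Omega$ there is a filter $F_\omega$ of subsets of $\Omega$ such that every $A_\omega\in F_\omega$ satisfies: (1) $\mu(A_\omega\cap B(\omega,\delta))>0$ for every $\delta>0$; (2) $f(\omega_k)\to f(\omega)$ for every sequence $\omega_k\in A_\omega$ with $\omega_k\to\omega$; (3) $T^n(A_\omega)\in F_{T^n\omega}$ for every $n\in\mathbb{Z}^\gamma$. A self-adjoint operator $H$ on $\ell^2(\mathbb{Z}^\gamma)$ has ULE if it has a complete orthonormal set of eigenfunctions $\{\phi_n\}$ and there exist $\alpha>0$, $C>0$ and points $m_n\in\mathbb{Z}^\gamma$ with $|\phi_n(m)|\le Ce^{-\alpha|m-m_n|}$ for all $n,m$. *)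

theory Defs
  imports "HOL-Analysis.Analysis"
begin

text \<open>The lattice Z^gamma is represented as functions from a finite type 'g into int.\<close>

definition lat_norm :: "('g::finite \<Rightarrow> int) \<Rightarrow> real" where
  "lat_norm n = sqrt (\<Sum>i\<in>UNIV. (real_of_int (n i))^2)"

text \<open>Integer powers of a map (for bijections; negative powers use the inverse).\<close>
definition zpow :: "('a \<Rightarrow> 'a) \<Rightarrow> int \<Rightarrow> 'a \<Rightarrow> 'a" where
  "zpow g k = (if 0 \<le> k then g ^^ nat k else (inv g) ^^ nat (- k))"

text \<open>T^n = T_1^{n_1} ... T_gamma^{n_gamma} (order irrelevant when the T_i commute).\<close>
definition tpow :: "('g::finite \<Rightarrow> 'a \<Rightarrow> 'a) \<Rightarrow> ('g \<Rightarrow> int) \<Rightarrow> 'a \<Rightarrow> 'a" where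
  "tpow T n = foldr (\<lambda>i g. zpow (T i) (n i) \<circ> g) (SOME xs. distinct xs \<and> set xs = UNIV) id"

definition is_l2 :: "(('g::finite \<Rightarrow> int) \<Rightarrow> complex) \<Rightarrow> bool" where
  "is_l2 u \<longleftrightarrow> (\<lambda>n. (cmod (u n))^2) summable_on UNIV"

definition l2_inner :: "(('g::finite \<Rightarrow> int) \<Rightarrow> complex) \<Rightarrow> (('g \<Rightarrow> int) \<Rightarrow> complex) \<Rightarrow> complex" where
  "l2_inner u v = infsum (\<lambda>n. cnj (u n) * v n) UNIV"

definition schr_op :: "('g::finite \<Rightarrow> 'a \<Rightarrow> 'a) \<Rightarrow> ('a \<Rightarrow> real) \<Rightarrow> 'a
    \<Rightarrow> (('g \<Rightarrow> int) \<Rightarrow> complex) \<Rightarrow> ('g \<Rightarrow> int) \<Rightarrow> complex" where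
  "schr_op T f \<omega> u n = (\<Sum>m\<in>{m. lat_norm (m - n) = 1}. u m) + complex_of_real (f (tpow T n \<omega>)) * u n"

text \<open>ULE with explicit constants alpha, C: a complete orthonormal set of eigenfunctions
  (indexed by nat; l^2(Z^gamma) is separable and infinite-dimensional) with centres c.\<close>
definition ULE_const :: "real \<Rightarrow> real \<Rightarrow> ((('g::finite \<Rightarrow> int) \<Rightarrow> complex) \<Rightarrow> (('g \<Rightarrow> int) \<Rightarrow> complex)) \<Rightarrow> bool" where
  "ULE_const \<alpha> C H \<longleftrightarrow>
    (\<exists>(\<phi>::nat \<Rightarrow> ('g \<Rightarrow> int) \<Rightarrow> complex) (E::nat \<Rightarrow> complex) (c::nat \<Rightarrow> 'g \<Rightarrow> int).
       (\<forall>k. is_l2 (\<phi> k)) \<and>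
       (\<forall>k j. l2_inner (\<phi> k) (\<phi> j) = (if k = j then 1 else 0)) \<and>
       (\<forall>u. is_l2 u \<and> (\<forall>k. l2_inner (\<phi> k) u = 0) \<longrightarrow> u = (\<lambda>_. 0)) \<and>
       (\<forall>k. H (\<phi> k) = (\<lambda>n. E k * \<phi> k n)) \<and>
       (\<forall>k m. cmod (\<phi> k m) \<le> C * exp (- \<alpha> * lat_norm (m - c k))))"

definition has_ULE :: "((('g::finite \<Rightarrow> int) \<Rightarrow> complex) \<Rightarrow> (('g \<Rightarrow> int) \<Rightarrow> complex)) \<Rightarrow> bool" where
  "has_ULE H \<longleftrightarrow> (\<exists>\<alpha>>0. \<exists>C>0. ULE_const \<alpha> C H)"

definition ergodic_action :: "'a measure \<Rightarrow> ('g \<Rightarrow> 'a \<Rightarrow> 'a) \<Rightarrow> bool" where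
  "ergodic_action \<mu> T \<longleftrightarrow>
     (\<forall>i. T i \<in> measurable \<mu> \<mu> \<and> (\<forall>A\<in>sets \<mu>. emeasure \<mu> (T i -` A \<inter> space \<mu>) = emeasure \<mu> A)) \<and>
     (\<forall>A\<in>sets \<mu>. (\<forall>i. T i -` A \<inter> space \<mu> = A) \<longrightarrow> emeasure \<mu> A = 0 \<or> emeasure \<mu> (space \<mu> - A) = 0)"

definition msupp :: "('a::metric_space) measure \<Rightarrow> 'a set" where
  "msupp \<mu> = {\<omega>. \<forall>\<delta>>0. emeasure \<mu> (ball \<omega> \<delta>) > 0}"

definition inv_cont_filter :: "('a::metric_space) measure \<Rightarrow> ('g::finite \<Rightarrow> 'a \<Rightarrow> 'a) \<Rightarrow> ('a \<Rightarrow> real) \<Rightarrow> bool" where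
  "inv_cont_filter \<mu> T f \<longleftrightarrow>
     (\<exists>F :: 'a \<Rightarrow> 'a filter. \<forall>\<omega> A. eventually (\<lambda>x. x \<in> A) (F \<omega>) \<longrightarrow>
        (\<forall>\<delta>>0. outer_measure_of \<mu> (A \<inter> ball \<omega> \<delta>) > 0) \<and>
        (\<forall>s. (\<forall>k. s k \<in> A) \<and> s \<longlonglongrightarrow> \<omega> \<longrightarrow> (\<lambda>k. f (s k)) \<longlonglongrightarrow> f \<omega>) \<and>
        (\<forall>n. eventually (\<lambda>x. x \<in> tpow T n ` A) (F (tpow T n \<omega>))))"

end

(*
  Since condition (2) of a continuity filter applies to the whole space, f is continuous, and as
  every T^n is a homeomorphism, the potentials n |-> f (T^n w_j) converge pointwise whenever
  w_j --> w. The heart of the proof is that ULE with fixed constants alpha, C survives such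
  limits: orthonormality and the decay bound allow at most N(alpha, C) eigenvectors per centre,
  so along a diagonal subsequence all eigenvectors converge pointwise; dominated convergence
  preserves orthonormality and the Parseval identity sum_a |phi_a(m)|^2 = 1 (which is
  equivalent to completeness), and the eigenvalue equations pass to the limit.
  ULE with given constants is invariant along T-orbits, and each point of the positive-measure
  set has ULE with constants 1/(k+1), k+1 for some k. By ergodicity the orbit of one of these
  level sets is dense in supp mu, so the limit step yields ULE with those constants on supp mu.
*)

theory Submission
  imports Defs "HOL-Library.Function_Algebras" "HOL-Library.Diagonal_Subsequence"
begin

section \<open>The lattice norm\<close>

definition lattice_vec :: "('g::finite \<Rightarrow> int) \<Rightarrow> real^'g" where
  "lattice_vec n = (\<chi> i. real_of_int (n i))"

lemma lat_norm_eq_norm: "lat_norm n = norm (lattice_vec n)"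
  unfolding lat_norm_def lattice_vec_def norm_vec_def L2_set_def by simp

lemma lattice_vec_diff: "lattice_vec (a - b) = lattice_vec a - lattice_vec b"
  unfolding lattice_vec_def by (simp add: vec_eq_iff)

lemma lat_norm_nonneg: "lat_norm n \<ge> 0"
  by (simp add: lat_norm_eq_norm)

lemma lat_norm_minus_commute: "lat_norm (a - b) = lat_norm (b - a)"
  by (simp add: lat_norm_eq_norm lattice_vec_diff norm_minus_commute)

lemma lat_norm_triangle: "lat_norm (a - b) \<le> lat_norm (a - c) + lat_norm (b - c)"
proof -
  have "lattice_vec (a - b) = lattice_vec (a - c) - lattice_vec (b - c)" by (simp add: lattice_vec_diff)
  then show ?thesis by (simp add: lat_norm_eq_norm norm_triangle_ineq4)
qed

lemma abs_component_le_lat_norm: "\<bar>real_of_int (n i)\<bar> \<le> lat_norm n"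
proof -
  have "\<bar>real_of_int (n i)\<bar> = \<bar>lattice_vec n $ i\<bar>" by (simp add: lattice_vec_def)
  also have "\<dots> \<le> norm (lattice_vec n)" by (rule component_le_norm_cart)
  finally show ?thesis by (simp add: lat_norm_eq_norm)
qed

lemma sum_abs_components_le_lat_norm:
  "(\<Sum>i\<in>UNIV. \<bar>real_of_int (n i)\<bar>) \<le> real CARD('g) * lat_norm (n::'g::finite \<Rightarrow> int)"
proof -
  have "(\<Sum>i\<in>UNIV. \<bar>real_of_int (n i)\<bar>) \<le> (\<Sum>i\<in>(UNIV::'g set). lat_norm n)"
    by (intro sum_mono abs_component_le_lat_norm)
  then show ?thesis by simp
qed

lemma exp_neg_lat_norm_le_1: "\<alpha> \<ge> 0 \<Longrightarrow> exp (- \<alpha> * lat_norm n) \<le> 1"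
  using lat_norm_nonneg[of n] by simp

section \<open>Infinite sums\<close>

lemma infsum_split_finite:
  fixes u :: "'a \<Rightarrow> 'b::banach"
  assumes "finite F" "F \<subseteq> A" "u summable_on A"
  shows "infsum u A = sum u F + infsum u (A - F)"
proof -
  have "infsum u A = infsum u (F \<union> (A - F))" using assms by (simp add: Un_absorb1)
  also have "\<dots> = infsum u F + infsum u (A - F)"
    by (rule infsum_Un_disjoint) (use assms in \<open>auto intro: summable_on_subset_banach\<close>)
  finally show ?thesis using assms by simp
qed

lemma infsum_small_tail:
  fixes h :: "'a \<Rightarrow> real"
  assumes hs: "h summable_on A" and e: "e > 0"
  shows "\<exists>F. finite F \<and> F \<subseteq> A \<and> infsum h (A - F) \<le> e"
proof -
  obtain F where F: "finite F" "F \<subseteq> A" "dist (sum h F) (infsum h A) \<le> e"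
    using infsum_finite_approximation[OF hs e] by blast
  then have "infsum h (A - F) = infsum h A - sum h F" using infsum_split_finite[OF F(1,2) hs] by simp
  with F show ?thesis by (auto simp: dist_real_def)
qed

lemma infsum_diff:
  fixes f g :: "'a \<Rightarrow> 'b::{topological_ab_group_add, t2_space}"
  assumes "f summable_on A" "g summable_on A"
  shows "infsum (\<lambda>x. f x - g x) A = infsum f A - infsum g A"
proof -
  have "infsum (\<lambda>x. f x + - g x) A = infsum f A + infsum (\<lambda>x. - g x) A"
    by (rule infsum_add) (use assms in \<open>auto simp: summable_on_uminus\<close>)
  then show ?thesis by (simp add: infsum_uminus)
qed

lemma infsum_delta:
  "infsum (\<lambda>n. if n = m then x else (0::'b::{topological_comm_monoid_add,t2_space})) UNIV = x"
proof -
  have "((\<lambda>n. if n = m then x else 0) has_sum x) UNIV"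
    by (rule has_sum_finite_neutralI[where B="{m}"]) auto
  then show ?thesis by (rule infsumI)
qed

lemma norm_infsum_le_dominated:
  fixes f :: "'a \<Rightarrow> 'b::banach"
  assumes hs: "h summable_on A" and b: "\<And>x. x \<in> A \<Longrightarrow> norm (f x) \<le> h x"
  shows "norm (infsum f A) \<le> infsum h A" and "f summable_on A"
proof -
  have fa: "(\<lambda>x. norm (f x)) summable_on A" using Infinite_Sum.abs_summable_on_comparison_test'[OF hs b] .
  show fs: "f summable_on A" using abs_summable_summable[OF fa] .
  show "norm (infsum f A) \<le> infsum h A"
    by (rule norm_infsum_le[OF has_sum_infsum[OF fs] has_sum_infsum[OF hs] b])
qed

lemma tendsto_infsum_dominated:
  fixes g :: "nat \<Rightarrow> 'a \<Rightarrow> 'b::banach" and G :: "'a \<Rightarrow> 'b"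
  assumes lim: "\<And>x. x \<in> A \<Longrightarrow> (\<lambda>j. g j x) \<longlonglongrightarrow> G x"
    and bnd: "\<And>j x. x \<in> A \<Longrightarrow> norm (g j x) \<le> h x"
    and hs: "h summable_on A"
  shows "(\<lambda>j. infsum (g j) A) \<longlonglongrightarrow> infsum G A"
proof (rule LIMSEQ_I)
  fix e :: real assume e: "e > 0"
  have bG: "norm (G x) \<le> h x" if x: "x \<in> A" for x
    by (rule tendsto_le[OF trivial_limit_sequentially tendsto_const tendsto_norm[OF lim[OF x]]])
       (use bnd x in auto)
  obtain F where F: "finite F" "F \<subseteq> A" "infsum h (A - F) \<le> e / 4"
    using infsum_small_tail[OF hs, of "e/4"] e by auto
  have "(\<lambda>j. sum (g j) F) \<longlonglongrightarrow> sum G F"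
    by (rule tendsto_sum) (use lim F in auto)
  then obtain no where no: "\<And>n. n \<ge> no \<Longrightarrow> norm (sum (g n) F - sum G F) < e / 4"
    using LIMSEQ_D[of "\<lambda>j. sum (g j) F" "sum G F" "e/4"] e by auto
  have hs': "h summable_on (A - F)" using hs by (rule summable_on_subset_banach) auto
  show "\<exists>no. \<forall>n\<ge>no. norm (infsum (g n) A - infsum G A) < e"
  proof (intro exI allI impI)
    fix n assume n: "n \<ge> no"
    have gs: "g n summable_on A" using norm_infsum_le_dominated(2)[OF hs, of "g n"] bnd by blast
    have Gs: "G summable_on A" using norm_infsum_le_dominated(2)[OF hs, of G] bG by blast
    have t1: "norm (infsum (g n) (A - F)) \<le> e / 4"
      using norm_infsum_le_dominated(1)[OF hs', of "g n"] bnd F(3) by (meson DiffD1 order_trans)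
    have t2: "norm (infsum G (A - F)) \<le> e / 4"
      using norm_infsum_le_dominated(1)[OF hs', of G] bG F(3) by (meson DiffD1 order_trans)
    have "infsum (g n) A - infsum G A = (sum (g n) F - sum G F) + infsum (g n) (A - F) - infsum G (A - F)"
      using infsum_split_finite[OF F(1,2) gs] infsum_split_finite[OF F(1,2) Gs] by (simp add: algebra_simps)
    also have "norm \<dots> \<le> norm (sum (g n) F - sum G F) + norm (infsum (g n) (A - F)) + norm (infsum G (A - F))"
      using norm_triangle_ineq4[of "(sum (g n) F - sum G F) + infsum (g n) (A - F)" "infsum G (A - F)"]
            norm_triangle_ineq[of "sum (g n) F - sum G F" "infsum (g n) (A - F)"] by linarith
    also have "\<dots> < e" using no[OF n] t1 t2 e by linarith
    finally show "norm (infsum (g n) A - infsum G A) < e" .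
  qed
qed

lemma summable_on_bounded_fibres:
  fixes c :: "'i \<Rightarrow> 'p" and h :: "'p \<Rightarrow> real"
  assumes mult: "\<And>p. finite {a\<in>I. c a = p} \<and> card {a\<in>I. c a = p} \<le> N"
    and h0: "\<And>p. h p \<ge> 0" and hs: "h summable_on UNIV"
  shows "(\<lambda>a. h (c a)) summable_on I" and "infsum (\<lambda>a. h (c a)) I \<le> real N * infsum h UNIV"
proof -
  have key: "sum (\<lambda>a. h (c a)) F \<le> real N * infsum h UNIV" if F: "finite F" "F \<subseteq> I" for F
  proof -
    have "sum (\<lambda>a. h (c a)) F = (\<Sum>p\<in>c ` F. sum (\<lambda>a. h (c a)) {x\<in>F. c x = p})"
      by (rule sum.image_gen[OF F(1)])
    also have "\<dots> = (\<Sum>p\<in>c ` F. real (card {x\<in>F. c x = p}) * h p)"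
      by (intro sum.cong refl) simp
    also have "\<dots> \<le> (\<Sum>p\<in>c ` F. real N * h p)"
    proof (intro sum_mono mult_right_mono h0)
      fix p
      have "card {x\<in>F. c x = p} \<le> card {a\<in>I. c a = p}"
        using mult[of p] F by (intro card_mono) auto
      then show "real (card {x\<in>F. c x = p}) \<le> real N" using mult[of p] by linarith
    qed
    also have "\<dots> = real N * (\<Sum>p\<in>c ` F. h p)" by (simp add: sum_distrib_left)
    also have "\<dots> \<le> real N * infsum h UNIV"
      by (intro mult_left_mono finite_sum_le_infsum hs) (use F h0 in auto)
    finally show ?thesis .
  qed
  show s: "(\<lambda>a. h (c a)) summable_on I"
    by (rule nonneg_bdd_above_summable_on) (use h0 key in \<open>auto intro!: bdd_aboveI2\<close>)
  show "infsum (\<lambda>a. h (c a)) I \<le> real N * infsum h UNIV"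
    by (rule infsum_le_finite_sums[OF s key]) auto
qed

lemma summable_on_Sigma_bound:
  fixes F :: "'a \<times> 'b \<Rightarrow> real"
  assumes F0: "\<And>a b. a \<in> A \<Longrightarrow> b \<in> B \<Longrightarrow> F (a, b) \<ge> 0"
    and inner: "\<And>a. a \<in> A \<Longrightarrow> (\<lambda>b. F (a, b)) summable_on B"
    and ib: "\<And>a. a \<in> A \<Longrightarrow> infsum (\<lambda>b. F (a, b)) B \<le> G a"
    and Gs: "G summable_on A"
  shows "F summable_on A \<times> B"
proof -
  have "(\<lambda>a. infsum (\<lambda>b. F (a, b)) B) summable_on A"
    by (rule summable_on_comparison_test[OF Gs]) (use ib F0 in \<open>auto intro: infsum_nonneg\<close>)
  then have "F summable_on Sigma A (\<lambda>_. B)"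
    by (intro summable_on_SigmaI[where g="\<lambda>a. infsum (\<lambda>b. F (a, b)) B"])
       (use inner F0 in auto)
  then show ?thesis by simp
qed

lemma infsum_of_real:
  "(f::'a \<Rightarrow> real) summable_on A \<Longrightarrow> infsum (\<lambda>x. complex_of_real (f x)) A = complex_of_real (infsum f A)"
  by (rule infsumI, rule has_sum_of_real, rule has_sum_infsum)

lemma has_sum_finite_sum:
  fixes f :: "'i \<Rightarrow> 'a \<Rightarrow> 'b::topological_comm_monoid_add"
  assumes "finite K" "\<And>a. a \<in> K \<Longrightarrow> (f a has_sum S a) A"
  shows "((\<lambda>x. \<Sum>a\<in>K. f a x) has_sum (\<Sum>a\<in>K. S a)) A"
  using assms by (induction K rule: finite_induct) (simp_all add: has_sum_add)

lemma infsum_by_fibres: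
  fixes f :: "'a \<Rightarrow> 'b::banach" and cc :: "'a \<Rightarrow> 'p"
  assumes fs: "f summable_on UNIV" and fin: "\<And>p. finite {k. cc k = p}"
  shows "infsum f UNIV = infsum (\<lambda>p. sum f {k. cc k = p}) UNIV"
proof -
  have bij: "bij_betw (\<lambda>k. (cc k, k)) UNIV (Sigma UNIV (\<lambda>p. {k. cc k = p}))"
    by (rule bij_betwI[where g=snd]) auto
  have e1: "infsum (\<lambda>x. f (snd x)) (Sigma UNIV (\<lambda>p. {k. cc k = p})) = infsum f UNIV"
    using infsum_reindex_bij_betw[OF bij, of "\<lambda>x. f (snd x)"] by simp
  have s1: "(\<lambda>x. f (snd x)) summable_on (Sigma UNIV (\<lambda>p. {k. cc k = p}))"
    using summable_on_reindex_bij_betw[OF bij, of "\<lambda>x. f (snd x)"] fs by simp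
  have "infsum (\<lambda>p. infsum (\<lambda>k. f (snd (p, k))) {k. cc k = p}) UNIV = infsum (\<lambda>x. f (snd x)) (Sigma UNIV (\<lambda>p. {k. cc k = p}))"
    by (rule infsum_Sigma_banach[OF s1])
  then show ?thesis using e1 fin by simp
qed

section \<open>Exponential weights on the lattice\<close>

lemma power2_exp_neg: "(exp (- a * x))^2 = exp (- (2 * a) * (x::real))"
proof -
  have "- (2 * a) * x = (- a * x) + (- a * x)" by simp
  then show ?thesis by (simp only: power2_eq_square exp_add)
qed

lemma power2_le_exp_bound:
  assumes "cmod z \<le> C * exp (- a * x)"
  shows "(cmod z)^2 \<le> C^2 * exp (- (2 * a) * x)"
proof -
  have "(cmod z)^2 \<le> (C * exp (- a * x))^2" by (rule power_mono[OF assms]) simp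
  also have "\<dots> = C^2 * exp (- (2 * a) * x)"
    by (simp add: power_mult_distrib power2_eq_square exp_add[symmetric])
  finally show ?thesis .
qed

lemma summable_exp_abs_int:
  assumes b: "b > 0"
  shows "(\<lambda>z::int. exp (- b * \<bar>real_of_int z\<bar>)) summable_on UNIV"
proof -
  have geo: "(\<lambda>n::nat. exp (- b * real n)) summable_on UNIV"
  proof -
    have "summable (\<lambda>n::nat. exp (- b) ^ n)" using b by (intro summable_geometric) simp
    moreover have "exp (- b * real n) = exp (- b) ^ n" for n
      by (simp add: exp_of_nat_mult[symmetric] mult.commute)
    ultimately have "summable (\<lambda>n::nat. exp (- b * real n))" by simp
    then show ?thesis by (subst summable_on_UNIV_nonneg_real_iff) auto
  qed
  have 1: "(\<lambda>z::int. exp (- b * \<bar>real_of_int z\<bar>)) summable_on range int"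
    by (subst summable_on_reindex) (use geo in \<open>auto simp: o_def\<close>)
  have 2: "(\<lambda>z::int. exp (- b * \<bar>real_of_int z\<bar>)) summable_on range (\<lambda>n. - int n)"
    by (subst summable_on_reindex) (use geo in \<open>auto simp: o_def inj_on_def\<close>)
  have "UNIV = range int \<union> range (\<lambda>n. - int n)"
  proof (rule set_eqI)
    fix z :: int
    show "z \<in> UNIV \<longleftrightarrow> z \<in> range int \<union> range (\<lambda>n. - int n)"
    proof (cases "z \<ge> 0")
      case True then have "z = int (nat z)" by simp
      then show ?thesis by blast
    next
      case False then have "z = - int (nat (- z))" by simp
      then show ?thesis by blast
    qed
  qed
  then show ?thesis using summable_on_union[OF 1 2] by simp
qed

lemma summable_on_prod_components:
  fixes q :: "int \<Rightarrow> real"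
  assumes q0: "\<And>z. q z \<ge> 0" and qs: "q summable_on UNIV"
  shows "(\<lambda>d::'g::finite \<Rightarrow> int. \<Prod>i\<in>UNIV. q (d i)) summable_on UNIV"
proof (rule nonneg_bdd_above_summable_on)
  show "0 \<le> (\<Prod>i\<in>UNIV. q (d i))" for d by (intro prod_nonneg) (auto intro: q0)
  show "bdd_above (sum (\<lambda>d::'g \<Rightarrow> int. \<Prod>i\<in>UNIV. q (d i)) ` {F. F \<subseteq> UNIV \<and> finite F})"
  proof (rule bdd_aboveI2)
    fix F :: "('g \<Rightarrow> int) set" assume "F \<in> {F. F \<subseteq> UNIV \<and> finite F}"
    then have fF: "finite F" by simp
    define G where "G = (\<Union>d\<in>F. range d)"
    have fG: "finite G" unfolding G_def using fF by auto
    have fP: "finite (PiE (UNIV::'g set) (\<lambda>i. G))" by (intro finite_PiE) (auto simp: fG)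
    have sub: "F \<subseteq> PiE UNIV (\<lambda>i. G)" unfolding G_def by auto
    have "(\<Sum>d\<in>F. \<Prod>i\<in>UNIV. q (d i)) \<le> (\<Sum>d\<in>PiE (UNIV::'g set) (\<lambda>i. G). \<Prod>i\<in>UNIV. q (d i))"
      by (rule sum_mono2[OF fP sub]) (auto intro!: prod_nonneg q0)
    also have "\<dots> = (\<Prod>i\<in>(UNIV::'g set). \<Sum>z\<in>G. q z)"
      by (subst prod_sum_PiE) (auto simp: fG)
    also have "\<dots> \<le> (\<Prod>i\<in>(UNIV::'g set). infsum q UNIV)"
      by (intro prod_mono conjI sum_nonneg q0 finite_sum_le_infsum qs fG) auto
    finally show "(\<Sum>d\<in>F. \<Prod>i\<in>UNIV. q (d i)) \<le> (\<Prod>i\<in>(UNIV::'g set). infsum q UNIV)" .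
  qed
qed

lemma summable_exp_lat_norm:
  assumes a: "a > 0"
  shows "(\<lambda>d::'g::finite \<Rightarrow> int. exp (- a * lat_norm d)) summable_on UNIV"
proof -
  define b where "b = a / real CARD('g)"
  have b: "b > 0" using a by (simp add: b_def)
  have ps: "(\<lambda>d::'g \<Rightarrow> int. \<Prod>i\<in>UNIV. exp (- b * \<bar>real_of_int (d i)\<bar>)) summable_on UNIV"
    by (rule summable_on_prod_components) (use summable_exp_abs_int[OF b] in auto)
  show ?thesis
  proof (rule summable_on_comparison_test[OF ps])
    fix d :: "'g \<Rightarrow> int"
    have "(\<Prod>i\<in>UNIV. exp (- b * \<bar>real_of_int (d i)\<bar>)) = exp (\<Sum>i\<in>UNIV. - b * \<bar>real_of_int (d i)\<bar>)"
      by (simp add: exp_sum)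
    also have "(\<Sum>i\<in>UNIV. - b * \<bar>real_of_int (d i)\<bar>) = - b * (\<Sum>i\<in>UNIV. \<bar>real_of_int (d i)\<bar>)"
      by (simp add: sum_distrib_left)
    finally have eq: "(\<Prod>i\<in>UNIV. exp (- b * \<bar>real_of_int (d i)\<bar>)) = exp (- b * (\<Sum>i\<in>UNIV. \<bar>real_of_int (d i)\<bar>))" .
    have "b * (\<Sum>i\<in>UNIV. \<bar>real_of_int (d i)\<bar>) \<le> b * (real CARD('g) * lat_norm d)"
      using sum_abs_components_le_lat_norm[of d] b by (intro mult_left_mono) auto
    also have "\<dots> = a * lat_norm d" by (simp add: b_def)
    finally show "exp (- a * lat_norm d) \<le> (\<Prod>i\<in>UNIV. exp (- b * \<bar>real_of_int (d i)\<bar>))"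
      unfolding eq by simp
  qed simp
qed

lemma bij_minus_shift: "bij_betw (\<lambda>n. n - m) (UNIV :: 'a::group_add set) UNIV"
  by (rule bij_betwI[where g="\<lambda>n. n + m"]) (auto simp: algebra_simps)

lemma bij_plus_shift: "bij_betw (\<lambda>n. n + m) (UNIV :: 'a::group_add set) UNIV"
  by (rule bij_betwI[where g="\<lambda>n. n - m"]) (auto simp: algebra_simps)

lemma summable_on_minus_shift_iff:
  "(\<lambda>n. g (n - m)) summable_on (UNIV :: 'a::group_add set) \<longleftrightarrow> g summable_on UNIV"
  by (rule summable_on_reindex_bij_betw[OF bij_minus_shift])

lemma infsum_minus_shift:
  "infsum (\<lambda>n. g (n - m)) (UNIV :: 'a::group_add set) = infsum g UNIV"
  by (rule infsum_reindex_bij_betw[OF bij_minus_shift])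

lemma summable_on_plus_shift_iff:
  "(\<lambda>n. g (n + m)) summable_on (UNIV :: 'a::group_add set) \<longleftrightarrow> g summable_on UNIV"
  by (rule summable_on_reindex_bij_betw[OF bij_plus_shift])

lemma infsum_plus_shift:
  "infsum (\<lambda>n. g (n + m)) (UNIV :: 'a::group_add set) = infsum g UNIV"
  by (rule infsum_reindex_bij_betw[OF bij_plus_shift])

lemma summable_exp_lat_norm_shift:
  assumes a: "a > 0"
  shows "(\<lambda>n::'g::finite \<Rightarrow> int. exp (- a * lat_norm (n - c))) summable_on UNIV"
  using summable_exp_lat_norm[OF a] summable_on_minus_shift_iff[of "\<lambda>d. exp (- a * lat_norm d)" c] by simp

lemma infsum_exp_lat_norm_shift:
  "infsum (\<lambda>n::'g::finite \<Rightarrow> int. exp (- a * lat_norm (n - c))) UNIV = infsum (\<lambda>d::'g \<Rightarrow> int. exp (- a * lat_norm d)) UNIV"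
  using infsum_minus_shift[of "\<lambda>d. exp (- a * lat_norm d)" c] by simp

section \<open>Square-summable lattice functions\<close>

lemma cnj_mult_self: "cnj z * z = complex_of_real ((cmod z)^2)"
  by (metis complex_norm_square mult.commute)

lemma cmod_mult_le_mean_sq: "cmod a * cmod b \<le> ((cmod a)^2 + (cmod b)^2) / 2"
proof -
  have "0 \<le> (cmod a - cmod b)^2" by simp
  then show ?thesis by (simp add: power2_diff)
qed

lemma is_l2_dominated:
  assumes "\<And>n. cmod (u n) \<le> g n" and "(\<lambda>n. (g n)^2) summable_on UNIV"
  shows "is_l2 u"
  unfolding is_l2_def
  by (rule summable_on_comparison_test[OF assms(2)]) (use assms(1) in \<open>auto intro: power_mono\<close>)

lemma is_l2_component_le:
  assumes "is_l2 u"
  shows "(cmod (u m))^2 \<le> infsum (\<lambda>n. (cmod (u n))^2) UNIV"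
proof -
  have "sum (\<lambda>n. (cmod (u n))^2) {m} \<le> infsum (\<lambda>n. (cmod (u n))^2) UNIV"
    by (rule finite_sum_le_infsum) (use assms in \<open>auto simp: is_l2_def\<close>)
  then show ?thesis by simp
qed

lemma l2_inner_summable:
  assumes "is_l2 u" "is_l2 v"
  shows "(\<lambda>n. cnj (u n) * v n) summable_on UNIV"
proof -
  have s: "(\<lambda>n. ((cmod (u n))^2 + (cmod (v n))^2) / 2) summable_on UNIV"
  proof -
    have "(\<lambda>n. ((cmod (u n))^2 + (cmod (v n))^2) * (1/2)) summable_on UNIV"
      using assms unfolding is_l2_def by (intro summable_on_cmult_left summable_on_add) auto
    then show ?thesis by simp
  qed
  have "(\<lambda>n. norm (cnj (u n) * v n)) summable_on UNIV"
    by (rule Infinite_Sum.abs_summable_on_comparison_test'[OF s]) (use cmod_mult_le_mean_sq in \<open>simp add: norm_mult\<close>)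
  then show ?thesis by (rule abs_summable_summable)
qed

lemma is_l2_diff:
  assumes "is_l2 u" "is_l2 v"
  shows "is_l2 (\<lambda>n. u n - v n)"
  unfolding is_l2_def
proof (rule summable_on_comparison_test)
  show "(\<lambda>n. 2 * (cmod (u n))^2 + 2 * (cmod (v n))^2) summable_on UNIV"
    using assms unfolding is_l2_def by (intro summable_on_add summable_on_cmult_right) auto
  fix n
  have "cmod (u n - v n) \<le> cmod (u n) + cmod (v n)" by (rule norm_triangle_ineq4)
  then have "(cmod (u n - v n))^2 \<le> (cmod (u n) + cmod (v n))^2" by (intro power_mono) auto
  also have "\<dots> \<le> 2 * (cmod (u n))^2 + 2 * (cmod (v n))^2"
    using cmod_mult_le_mean_sq[of "u n" "v n"] by (simp add: power2_sum)
  finally show "(cmod (u n - v n))^2 \<le> 2 * (cmod (u n))^2 + 2 * (cmod (v n))^2" .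
qed simp

lemma l2_inner_cnj: "l2_inner u w = cnj (l2_inner w u)"
  unfolding l2_inner_def by (simp flip: infsum_cnj add: mult.commute)

lemma is_l2_exp_decay:
  assumes a: "a > 0" and d: "\<And>n. cmod (u n) \<le> C * exp (- a * lat_norm (n - p))"
  shows "is_l2 u"
proof (rule is_l2_dominated[OF d])
  have "(\<lambda>n. C^2 * exp (- (2 * a) * lat_norm (n - p))) summable_on UNIV"
    by (intro summable_on_cmult_right summable_exp_lat_norm_shift) (use a in simp)
  then show "(\<lambda>n. (C * exp (- a * lat_norm (n - p)))^2) summable_on UNIV"
    by (simp only: power_mult_distrib power2_exp_neg)
qed

definition kronecker :: "('g \<Rightarrow> int) \<Rightarrow> ('g \<Rightarrow> int) \<Rightarrow> complex" where
  "kronecker m n = (if n = m then 1 else 0)"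

lemma kronecker_is_l2: "is_l2 (kronecker (m::'g::finite \<Rightarrow> int))"
proof -
  have "((\<lambda>n. (cmod (kronecker m n))^2) has_sum 1) UNIV"
    by (rule has_sum_finite_neutralI[where B="{m}"]) (auto simp: kronecker_def)
  then show ?thesis unfolding is_l2_def by (rule has_sum_imp_summable)
qed

lemma l2_inner_kronecker_right: "l2_inner u (kronecker m) = cnj (u m)"
proof -
  have "(\<lambda>n. cnj (u n) * kronecker m n) = (\<lambda>n. if n = m then cnj (u m) else 0)"
    by (auto simp: kronecker_def)
  then show ?thesis unfolding l2_inner_def by (simp add: infsum_delta)
qed

lemma l2_inner_kronecker_left: "l2_inner (kronecker m) u = u m"
proof -
  have "(\<lambda>n. cnj (kronecker m n) * u n) = (\<lambda>n. if n = m then u m else 0)"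
    by (auto simp: kronecker_def)
  then show ?thesis unfolding l2_inner_def by (simp add: infsum_delta)
qed

lemma l2_inner_diff:
  assumes "is_l2 u" "is_l2 a" "is_l2 b"
  shows "l2_inner u (\<lambda>n. a n - b n) = l2_inner u a - l2_inner u b"
proof -
  have "l2_inner u (\<lambda>n. a n - b n) = infsum (\<lambda>n. cnj (u n) * a n - cnj (u n) * b n) UNIV"
    unfolding l2_inner_def by (simp add: algebra_simps)
  also have "\<dots> = l2_inner u a - l2_inner u b"
    unfolding l2_inner_def by (rule infsum_diff) (use assms in \<open>auto intro: l2_inner_summable\<close>)
  finally show ?thesis .
qed

lemma l2_inner_self:
  assumes "is_l2 u"
  shows "l2_inner u u = complex_of_real (infsum (\<lambda>n. (cmod (u n))^2) UNIV)"
  unfolding l2_inner_def cnj_mult_self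
  by (rule infsum_of_real) (use assms in \<open>simp add: is_l2_def\<close>)

lemma norm_sq_orthonormal_combination:
  fixes \<psi> :: "'i \<Rightarrow> ('g::finite \<Rightarrow> int) \<Rightarrow> complex" and z :: "'i \<Rightarrow> complex"
  assumes K: "finite K" and l2: "\<And>a. a \<in> K \<Longrightarrow> is_l2 (\<psi> a)"
    and ON: "\<And>a b. a \<in> K \<Longrightarrow> b \<in> K \<Longrightarrow> l2_inner (\<psi> a) (\<psi> b) = (if a = b then 1 else 0)"
  defines "w \<equiv> \<lambda>x. \<Sum>a\<in>K. z a * \<psi> a x"
  shows "(\<lambda>x. (cmod (w x))^2) summable_on UNIV"
    and "infsum (\<lambda>x. (cmod (w x))^2) UNIV = (\<Sum>a\<in>K. (cmod (z a))^2)"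
proof -
  define T where "T a b x = z a * cnj (z b) * (cnj (\<psi> b x) * \<psi> a x)" for a b x
  have w_sq: "complex_of_real ((cmod (w x))^2) = (\<Sum>a\<in>K. \<Sum>b\<in>K. T a b x)" for x
    unfolding cnj_mult_self[symmetric] w_def T_def by (simp add: sum_product algebra_simps)
  have T_sum: "(T a b has_sum z a * cnj (z b) * l2_inner (\<psi> b) (\<psi> a)) UNIV" if "a \<in> K" "b \<in> K" for a b
    unfolding T_def l2_inner_def
    by (intro has_sum_cmult_right has_sum_infsum l2_inner_summable l2 that)
  have "((\<lambda>x. \<Sum>a\<in>K. \<Sum>b\<in>K. T a b x) has_sum
      (\<Sum>a\<in>K. \<Sum>b\<in>K. z a * cnj (z b) * l2_inner (\<psi> b) (\<psi> a))) UNIV"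
    by (intro has_sum_finite_sum K T_sum)
  also have "(\<Sum>a\<in>K. \<Sum>b\<in>K. z a * cnj (z b) * l2_inner (\<psi> b) (\<psi> a))
      = complex_of_real (\<Sum>a\<in>K. (cmod (z a))^2)"
  proof -
    have "(\<Sum>b\<in>K. z a * cnj (z b) * l2_inner (\<psi> b) (\<psi> a)) = complex_of_real ((cmod (z a))^2)"
      if a: "a \<in> K" for a
    proof -
      have "(\<Sum>b\<in>K. z a * cnj (z b) * l2_inner (\<psi> b) (\<psi> a)) = (\<Sum>b\<in>K. if b = a then z a * cnj (z b) else 0)"
        using a by (intro sum.cong) (simp_all add: ON)
      also have "\<dots> = cnj (z a) * z a" using K a by simp
      finally show ?thesis by (simp only: cnj_mult_self)
    qed
    then show ?thesis by simp
  qed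
  finally have "((\<lambda>x. complex_of_real ((cmod (w x))^2)) has_sum complex_of_real (\<Sum>a\<in>K. (cmod (z a))^2)) UNIV"
    by (simp only: w_sq)
  then have "((\<lambda>x. (cmod (w x))^2) has_sum (\<Sum>a\<in>K. (cmod (z a))^2)) UNIV"
    by (simp only: has_sum_of_real_iff)
  then show "(\<lambda>x. (cmod (w x))^2) summable_on UNIV"
    and "infsum (\<lambda>x. (cmod (w x))^2) UNIV = (\<Sum>a\<in>K. (cmod (z a))^2)"
    by (auto simp: summable_on_def infsumI)
qed

lemma bessel_pointwise:
  fixes \<psi> :: "'i \<Rightarrow> ('g::finite \<Rightarrow> int) \<Rightarrow> complex"
  assumes K: "finite K" and l2: "\<And>a. a \<in> K \<Longrightarrow> is_l2 (\<psi> a)"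
    and ON: "\<And>a b. a \<in> K \<Longrightarrow> b \<in> K \<Longrightarrow> l2_inner (\<psi> a) (\<psi> b) = (if a = b then 1 else 0)"
  shows "(\<Sum>a\<in>K. (cmod (\<psi> a n))^2) \<le> 1"
proof -
  define s where "s = (\<Sum>a\<in>K. (cmod (\<psi> a n))^2)"
  define w where "w x = (\<Sum>a\<in>K. cnj (\<psi> a n) * \<psi> a x)" for x
  note norm_w = norm_sq_orthonormal_combination[OF K l2 ON, of "\<lambda>a. cnj (\<psi> a n)", folded w_def]
  \<comment> \<open>\<open>w(n) = s\<close> while \<open>\<parallel>w\<parallel>\<^sup>2 = s\<close>, hence \<open>s\<^sup>2 \<le> s\<close>.\<close>
  have s0: "s \<ge> 0" unfolding s_def by (simp add: sum_nonneg)
  have "w n = complex_of_real s" unfolding w_def s_def by (simp add: cnj_mult_self)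
  then have "s^2 = (cmod (w n))^2" using s0 by simp
  also have "\<dots> \<le> infsum (\<lambda>x. (cmod (w x))^2) UNIV"
    using is_l2_component_le[of w n] norm_w(1) by (simp add: is_l2_def)
  also have "\<dots> = s" using norm_w(2) by (simp add: s_def)
  finally have "s * s \<le> s * 1" by (simp add: power2_eq_square)
  with s0 show ?thesis
    unfolding s_def[symmetric] by (cases "s = 0") (auto dest: mult_left_le_imp_le)
qed

section \<open>Localized orthonormal families\<close>

locale localized_family =
  fixes I :: "'i set" and \<psi> :: "'i \<Rightarrow> ('g::finite \<Rightarrow> int) \<Rightarrow> complex" and c :: "'i \<Rightarrow> 'g \<Rightarrow> int"
    and \<alpha> C :: real and N :: nat
  assumes alpha: "\<alpha> > 0" and Cpos: "C \<ge> 0"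
    and decay: "\<And>a n. a \<in> I \<Longrightarrow> cmod (\<psi> a n) \<le> C * exp (- \<alpha> * lat_norm (n - c a))"
    and mult: "\<And>p. finite {a\<in>I. c a = p} \<and> card {a\<in>I. c a = p} \<le> N"
begin

lemma summable_exp_dist_centres:
  assumes b: "b > 0"
  shows "(\<lambda>a. exp (- b * lat_norm (m - c a))) summable_on I"
proof -
  have "(\<lambda>p. exp (- b * lat_norm (m - p))) summable_on UNIV"
    using summable_exp_lat_norm_shift[OF b, of m] by (simp add: lat_norm_minus_commute)
  then show ?thesis
    using summable_on_bounded_fibres(1)[OF mult, of "\<lambda>p. exp (- b * lat_norm (m - p))"] by simp
qed

lemma member_is_l2: "a \<in> I \<Longrightarrow> is_l2 (\<psi> a)"
  by (rule is_l2_exp_decay[OF alpha]) (rule decay)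

text \<open>\<open>proj_kernel m\<close> is the orthogonal projection of the unit vector at \<open>m\<close> onto the closed span
  of the family; completeness will be read off from \<open>proj_kernel m = kronecker m\<close>.\<close>

definition proj_kernel :: "('g \<Rightarrow> int) \<Rightarrow> ('g \<Rightarrow> int) \<Rightarrow> complex" where
  "proj_kernel m n = infsum (\<lambda>a. cnj (\<psi> a m) * \<psi> a n) I"

lemma proj_kernel_bound:
  "cmod (proj_kernel m n)
     \<le> C^2 * infsum (\<lambda>a. exp (- (\<alpha>/2) * lat_norm (m - c a))) I * exp (- (\<alpha>/2) * lat_norm (n - m))"
proof -
  define K where "K = C^2 * exp (- (\<alpha>/2) * lat_norm (n - m))"
  have term_bound: "cmod (cnj (\<psi> a m) * \<psi> a n) \<le> K * exp (- (\<alpha>/2) * lat_norm (m - c a))"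
    if a: "a \<in> I" for a
  proof -
    have "cmod (cnj (\<psi> a m) * \<psi> a n) = cmod (\<psi> a m) * cmod (\<psi> a n)" by (simp add: norm_mult)
    also have "\<dots> \<le> (C * exp (- \<alpha> * lat_norm (m - c a))) * (C * exp (- \<alpha> * lat_norm (n - c a)))"
      by (intro mult_mono decay a) (use Cpos in auto)
    also have "\<dots> = C^2 * exp (- \<alpha> * (lat_norm (m - c a) + lat_norm (n - c a)))"
      by (simp add: power2_eq_square exp_add[symmetric] algebra_simps)
    also have "\<dots> \<le> C^2 * exp (- (\<alpha>/2) * lat_norm (n - m) + - (\<alpha>/2) * lat_norm (m - c a))"
    proof (intro mult_left_mono)
      have "lat_norm (n - m) \<le> lat_norm (n - c a) + lat_norm (m - c a)" by (rule lat_norm_triangle)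
      then have "(\<alpha>/2) * lat_norm (n - m) \<le> (\<alpha>/2) * (lat_norm (n - c a) + lat_norm (m - c a))"
        using alpha by (intro mult_left_mono) auto
      moreover have "0 \<le> \<alpha> * lat_norm (n - c a)" using alpha by (simp add: lat_norm_nonneg)
      ultimately show "exp (- \<alpha> * (lat_norm (m - c a) + lat_norm (n - c a)))
          \<le> exp (- (\<alpha>/2) * lat_norm (n - m) + - (\<alpha>/2) * lat_norm (m - c a))"
        by (simp add: algebra_simps)
    qed simp
    also have "\<dots> = K * exp (- (\<alpha>/2) * lat_norm (m - c a))"
      unfolding K_def by (simp only: exp_add mult.assoc)
    finally show ?thesis .
  qed
  have "(\<lambda>a. K * exp (- (\<alpha>/2) * lat_norm (m - c a))) summable_on I"
    by (intro summable_on_cmult_right summable_exp_dist_centres) (use alpha in simp)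
  then have "cmod (proj_kernel m n) \<le> infsum (\<lambda>a. K * exp (- (\<alpha>/2) * lat_norm (m - c a))) I"
    unfolding proj_kernel_def by (rule norm_infsum_le_dominated(1)) (rule term_bound)
  also have "\<dots> = K * infsum (\<lambda>a. exp (- (\<alpha>/2) * lat_norm (m - c a))) I"
    by (rule infsum_cmult_right')
  finally show ?thesis by (simp add: K_def algebra_simps)
qed

lemma proj_kernel_is_l2: "is_l2 (proj_kernel m)"
proof (rule is_l2_exp_decay)
  show "\<alpha>/2 > 0" using alpha by simp
  show "cmod (proj_kernel m n)
      \<le> C^2 * infsum (\<lambda>a. exp (- (\<alpha>/2) * lat_norm (m - c a))) I * exp (- (\<alpha>/2) * lat_norm (n - m))" for n
    by (rule proj_kernel_bound)
qed

lemma summable_product_majorant: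
  assumes u: "is_l2 u"
  shows "(\<lambda>(a, n). C * exp (- \<alpha> * lat_norm (m - c a))
      * (C^2 * exp (- (2*\<alpha>) * lat_norm (n - c a)) + (cmod (u n))^2)) summable_on I \<times> UNIV"
proof -
  define w where "w a = exp (- \<alpha> * lat_norm (m - c a))" for a
  define S2 where "S2 = infsum (\<lambda>d::'g \<Rightarrow> int. exp (- (2*\<alpha>) * lat_norm d)) UNIV"
  define U where "U = infsum (\<lambda>n. (cmod (u n))^2) UNIV"
  define F where "F a n = C * w a * (C^2 * exp (- (2*\<alpha>) * lat_norm (n - c a)) + (cmod (u n))^2)" for a n
  have us: "(\<lambda>n. (cmod (u n))^2) summable_on UNIV" using u by (simp add: is_l2_def)
  have es: "(\<lambda>n. exp (- (2*\<alpha>) * lat_norm (n - p))) summable_on UNIV" for p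
    by (rule summable_exp_lat_norm_shift) (use alpha in simp)
  have w0: "w a \<ge> 0" for a by (simp add: w_def)
  have inner_sum: "infsum (F a) UNIV = C * w a * (C^2 * S2 + U)" for a
  proof -
    have "infsum (F a) UNIV
        = C * w a * infsum (\<lambda>n. C^2 * exp (- (2*\<alpha>) * lat_norm (n - c a)) + (cmod (u n))^2) UNIV"
      unfolding F_def by (rule infsum_cmult_right')
    also have "infsum (\<lambda>n. C^2 * exp (- (2*\<alpha>) * lat_norm (n - c a)) + (cmod (u n))^2) UNIV
       = infsum (\<lambda>n. C^2 * exp (- (2*\<alpha>) * lat_norm (n - c a))) UNIV + U"
      unfolding U_def by (rule infsum_add) (intro summable_on_cmult_right es us)+
    also have "infsum (\<lambda>n. C^2 * exp (- (2*\<alpha>) * lat_norm (n - c a))) UNIV = C^2 * S2"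
      unfolding S2_def using infsum_exp_lat_norm_shift[of "2*\<alpha>" "c a"] by (simp add: infsum_cmult_right')
    finally show ?thesis .
  qed
  have "(\<lambda>(a, n). F a n) summable_on I \<times> UNIV"
  proof (rule summable_on_Sigma_bound[where G="\<lambda>a. w a * (C * (C^2 * S2 + U))"])
    show "(\<lambda>(a, n). F a n) (a, n) \<ge> 0" for a n unfolding F_def using Cpos w0 by auto
    show "(\<lambda>n. (\<lambda>(a, n). F a n) (a, n)) summable_on UNIV" for a
      unfolding F_def by (simp only: case_prod_conv) (intro summable_on_cmult_right summable_on_add es us)
    show "infsum (\<lambda>n. (\<lambda>(a, n). F a n) (a, n)) UNIV \<le> w a * (C * (C^2 * S2 + U))" for a
      by (simp add: inner_sum algebra_simps)
    show "(\<lambda>a. w a * (C * (C^2 * S2 + U))) summable_on I"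
      unfolding w_def by (intro summable_on_cmult_left summable_exp_dist_centres alpha)
  qed
  then show ?thesis by (simp add: F_def w_def)
qed

lemma summable_member_product:
  assumes u: "is_l2 u"
  shows "(\<lambda>(a, n). \<psi> a m * (cnj (\<psi> a n) * u n)) summable_on I \<times> UNIV"
proof -
  define w where "w a = exp (- \<alpha> * lat_norm (m - c a))" for a
  define F where "F a n = C * w a * (C^2 * exp (- (2*\<alpha>) * lat_norm (n - c a)) + (cmod (u n))^2)" for a n
  have w0: "w a \<ge> 0" for a by (simp add: w_def)
  have F_summable: "(\<lambda>(a, n). F a n) summable_on I \<times> UNIV"
    unfolding F_def w_def by (rule summable_product_majorant[OF u])
  have bound: "cmod (\<psi> a m * (cnj (\<psi> a n) * u n)) \<le> F a n" if a: "a \<in> I" for a n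
  proof -
    have "cmod (\<psi> a m * (cnj (\<psi> a n) * u n)) = cmod (\<psi> a m) * (cmod (\<psi> a n) * cmod (u n))"
      by (simp add: norm_mult)
    also have "\<dots> \<le> (C * w a) * (C^2 * exp (- (2*\<alpha>) * lat_norm (n - c a)) + (cmod (u n))^2)"
    proof (rule mult_mono)
      show "cmod (\<psi> a m) \<le> C * w a" unfolding w_def by (rule decay[OF a])
      have "cmod (\<psi> a n) * cmod (u n) \<le> ((cmod (\<psi> a n))^2 + (cmod (u n))^2) / 2"
        by (rule cmod_mult_le_mean_sq)
      also have "\<dots> \<le> (cmod (\<psi> a n))^2 + (cmod (u n))^2" by simp
      also have "\<dots> \<le> C^2 * exp (- (2*\<alpha>) * lat_norm (n - c a)) + (cmod (u n))^2"
        using power2_le_exp_bound[OF decay[OF a, of n]] by simp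
      finally show "cmod (\<psi> a n) * cmod (u n) \<le> C^2 * exp (- (2*\<alpha>) * lat_norm (n - c a)) + (cmod (u n))^2" .
    qed (use Cpos w0 in auto)
    finally show ?thesis by (simp add: F_def)
  qed
  have "(\<lambda>x. norm ((\<lambda>(a, n). \<psi> a m * (cnj (\<psi> a n) * u n)) x)) summable_on I \<times> UNIV"
    by (rule summable_on_comparison_test[OF F_summable]) (use bound in auto)
  then show ?thesis by (rule abs_summable_summable)
qed

lemma l2_inner_proj_kernel:
  assumes u: "is_l2 u"
  shows "l2_inner (proj_kernel m) u = infsum (\<lambda>a. \<psi> a m * l2_inner (\<psi> a) u) I"
proof -
  define X where "X a n = \<psi> a m * (cnj (\<psi> a n) * u n)" for a n
  have columns: "infsum (\<lambda>a. X a n) I = cnj (proj_kernel m n) * u n" for n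
  proof -
    have "cnj (proj_kernel m n) = infsum (\<lambda>a. \<psi> a m * cnj (\<psi> a n)) I"
      unfolding proj_kernel_def by (simp flip: infsum_cnj)
    then show ?thesis
      unfolding X_def by (simp add: infsum_cmult_left'[symmetric] mult.assoc)
  qed
  have rows: "infsum (X a) UNIV = \<psi> a m * l2_inner (\<psi> a) u" for a
    unfolding X_def l2_inner_def by (rule infsum_cmult_right')
  have "(\<lambda>(a, n). X a n) summable_on I \<times> UNIV"
    unfolding X_def by (rule summable_member_product[OF u])
  then have "infsum (\<lambda>a. infsum (\<lambda>n. X a n) UNIV) I = infsum (\<lambda>n. infsum (\<lambda>a. X a n) I) UNIV"
    by (rule infsum_swap_banach)
  then show ?thesis
    unfolding l2_inner_def columns rows by simp
qed

end

locale localized_orthonormal_family = localized_family +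
  assumes ON: "\<And>a b. a \<in> I \<Longrightarrow> b \<in> I \<Longrightarrow> l2_inner (\<psi> a) (\<psi> b) = (if a = b then 1 else 0)"
begin

lemma summable_sq_members: "(\<lambda>a. (cmod (\<psi> a m))^2) summable_on I"
proof (rule summable_on_comparison_test)
  show "(\<lambda>a. C^2 * exp (- (2*\<alpha>) * lat_norm (m - c a))) summable_on I"
    by (intro summable_on_cmult_right summable_exp_dist_centres) (use alpha in simp)
  show "(cmod (\<psi> a m))^2 \<le> C^2 * exp (- (2*\<alpha>) * lat_norm (m - c a))" if "a \<in> I" for a
    by (rule power2_le_exp_bound[OF decay[OF that]])
qed simp

lemma proj_kernel_diag: "proj_kernel m m = complex_of_real (infsum (\<lambda>a. (cmod (\<psi> a m))^2) I)"
  unfolding proj_kernel_def cnj_mult_self by (rule infsum_of_real[OF summable_sq_members])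

lemma l2_inner_member_proj_kernel:
  assumes b: "b \<in> I"
  shows "l2_inner (\<psi> b) (proj_kernel m) = cnj (\<psi> b m)"
proof -
  have "l2_inner (proj_kernel m) (\<psi> b) = infsum (\<lambda>a. \<psi> a m * l2_inner (\<psi> a) (\<psi> b)) I"
    by (rule l2_inner_proj_kernel[OF member_is_l2[OF b]])
  also have "\<dots> = infsum (\<lambda>a. if a = b then \<psi> b m else 0) I"
    by (rule infsum_cong) (use b ON in auto)
  also have "\<dots> = \<psi> b m"
  proof -
    have "((\<lambda>a. if a = b then \<psi> b m else 0) has_sum \<psi> b m) I"
      by (rule has_sum_finite_neutralI[where B="{b}"]) (use b in auto)
    then show ?thesis by (rule infsumI)
  qed
  finally show ?thesis by (subst l2_inner_cnj) simp
qed

lemma parseval_of_complete: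
  assumes compl: "\<And>u. is_l2 u \<Longrightarrow> (\<forall>a\<in>I. l2_inner (\<psi> a) u = 0) \<Longrightarrow> u = (\<lambda>_. 0)"
  shows "infsum (\<lambda>a. (cmod (\<psi> a m))^2) I = 1"
proof -
  define d where "d = (\<lambda>n. kronecker m n - proj_kernel m n)"
  have dl: "is_l2 d" unfolding d_def by (intro is_l2_diff kronecker_is_l2 proj_kernel_is_l2)
  have "l2_inner (\<psi> b) d = 0" if b: "b \<in> I" for b
    unfolding d_def using b
    by (simp add: l2_inner_diff member_is_l2 kronecker_is_l2 proj_kernel_is_l2 l2_inner_kronecker_right l2_inner_member_proj_kernel)
  then have "d = (\<lambda>_. 0)" using compl[OF dl] by blast
  then have "d m = 0" by simp
  then have "proj_kernel m m = 1" by (simp add: d_def kronecker_def)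
  then show ?thesis unfolding proj_kernel_diag by simp
qed

lemma complete_of_parseval:
  assumes P: "\<And>m. infsum (\<lambda>a. (cmod (\<psi> a m))^2) I = 1"
    and u: "is_l2 u" and orth: "\<forall>a\<in>I. l2_inner (\<psi> a) u = 0"
  shows "u = (\<lambda>_. 0)"
proof
  fix m
  have diag_one: "proj_kernel m m = 1" unfolding proj_kernel_diag P by simp
  have "l2_inner (proj_kernel m) (proj_kernel m) = infsum (\<lambda>a. \<psi> a m * l2_inner (\<psi> a) (proj_kernel m)) I"
    by (rule l2_inner_proj_kernel[OF proj_kernel_is_l2])
  also have "\<dots> = infsum (\<lambda>a. complex_of_real ((cmod (\<psi> a m))^2)) I"
    by (rule infsum_cong) (simp add: l2_inner_member_proj_kernel complex_norm_square[symmetric] del: of_real_power)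
  also have "\<dots> = 1" by (simp only: infsum_of_real[OF summable_sq_members] P) simp
  finally have "l2_inner (proj_kernel m) (proj_kernel m) = 1" .
  then have s1: "infsum (\<lambda>n. (cmod (proj_kernel m n))^2) UNIV = 1"
    unfolding l2_inner_self[OF proj_kernel_is_l2] by simp
  have off_diag_zero: "proj_kernel m n = 0" if n: "n \<noteq> m" for n
  proof -
    have "sum (\<lambda>n. (cmod (proj_kernel m n))^2) {n, m} \<le> infsum (\<lambda>n. (cmod (proj_kernel m n))^2) UNIV"
      by (rule finite_sum_le_infsum) (use proj_kernel_is_l2 in \<open>auto simp: is_l2_def\<close>)
    then have "(cmod (proj_kernel m n))^2 + (cmod (proj_kernel m m))^2 \<le> 1" using n s1 by simp
    then have "(cmod (proj_kernel m n))^2 \<le> 0" using diag_one by simp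
    then show ?thesis by simp
  qed
  have kernel_eq: "proj_kernel m = kronecker m"
  proof
    fix n show "proj_kernel m n = kronecker m n" using off_diag_zero diag_one by (cases "n = m") (auto simp: kronecker_def)
  qed
  have "u m = l2_inner (kronecker m) u" by (simp add: l2_inner_kronecker_left)
  also have "\<dots> = l2_inner (proj_kernel m) u" by (simp add: kernel_eq)
  also have "\<dots> = infsum (\<lambda>a. \<psi> a m * l2_inner (\<psi> a) u) I" by (rule l2_inner_proj_kernel[OF u])
  also have "\<dots> = 0" using orth by (simp add: infsum_0)
  finally show "u m = 0" .
qed

end

lemma unit_l2_norm_sq:
  assumes "is_l2 u" "l2_inner u u = 1"
  shows "infsum (\<lambda>n. (cmod (u n))^2) UNIV = 1"
  using l2_inner_self[OF assms(1)] assms(2) by simp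

lemma card_orthonormal_concentrated_le:
  fixes \<psi> :: "'i \<Rightarrow> ('g::finite \<Rightarrow> int) \<Rightarrow> complex"
  assumes K: "finite K" and l2: "\<And>a. a \<in> K \<Longrightarrow> is_l2 (\<psi> a)"
    and ON: "\<And>a b. a \<in> K \<Longrightarrow> b \<in> K \<Longrightarrow> l2_inner (\<psi> a) (\<psi> b) = (if a = b then 1 else 0)"
    and B: "finite B" and mass: "\<And>a. a \<in> K \<Longrightarrow> 1/2 \<le> (\<Sum>n\<in>B. (cmod (\<psi> a n))^2)"
  shows "card K \<le> 2 * card B"
proof -
  have "real (card K) * (1/2) = (\<Sum>a\<in>K. 1/2)" by simp
  also have "\<dots> \<le> (\<Sum>a\<in>K. \<Sum>n\<in>B. (cmod (\<psi> a n))^2)"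
    by (rule sum_mono) (rule mass)
  also have "\<dots> = (\<Sum>n\<in>B. \<Sum>a\<in>K. (cmod (\<psi> a n))^2)" by (rule sum.swap)
  also have "\<dots> \<le> (\<Sum>n\<in>B. 1)"
    by (rule sum_mono) (rule bessel_pointwise[OF K l2 ON])
  finally show ?thesis by simp
qed

lemma localized_mass_near_centre:
  assumes alpha: "\<alpha> > 0" and l2: "is_l2 u" and unit: "l2_inner u u = 1"
    and decay: "\<And>n. cmod (u n) \<le> C * exp (- \<alpha> * lat_norm (n - p))"
    and tail: "infsum (\<lambda>d. C^2 * exp (- (2*\<alpha>) * lat_norm d)) (UNIV - F) \<le> 1/2"
    and F: "finite F"
  shows "1/2 \<le> (\<Sum>n\<in>(\<lambda>d. d + p) ` F. (cmod (u n))^2)"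
proof -
  define B where "B = (\<lambda>d. d + p) ` F"
  define f where "f n = C^2 * exp (- (2*\<alpha>) * lat_norm (n - p))" for n
  have u_sq: "(\<lambda>n. (cmod (u n))^2) summable_on UNIV" using l2 by (simp add: is_l2_def)
  have "1 = (\<Sum>n\<in>B. (cmod (u n))^2) + infsum (\<lambda>n. (cmod (u n))^2) (UNIV - B)"
    using infsum_split_finite[OF _ _ u_sq, of B] unit_l2_norm_sq[OF l2 unit] F by (simp add: B_def)
  moreover have "infsum (\<lambda>n. (cmod (u n))^2) (UNIV - B) \<le> infsum f (UNIV - B)"
  proof (rule infsum_mono)
    show "(\<lambda>n. (cmod (u n))^2) summable_on UNIV - B"
      using u_sq by (rule summable_on_subset_banach) auto
    have "f summable_on UNIV" unfolding f_def
      by (intro summable_on_cmult_right summable_exp_lat_norm_shift) (use alpha in simp)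
    then show "f summable_on UNIV - B" by (rule summable_on_subset_banach) auto
    show "(cmod (u n))^2 \<le> f n" for n unfolding f_def by (rule power2_le_exp_bound[OF decay])
  qed
  moreover have "infsum f (UNIV - B) = infsum (\<lambda>d. f (d + p)) (UNIV - F)"
  proof (rule infsum_reindex_bij_betw[symmetric])
    show "bij_betw (\<lambda>d. d + p) (UNIV - F) (UNIV - B)"
      by (rule bij_betwI[where g="\<lambda>n. n - p"]) (auto simp: B_def image_iff, metis diff_add_cancel)
  qed
  ultimately show ?thesis using tail by (simp add: f_def B_def)
qed

lemma centre_multiplicity_bound:
  assumes alpha: "\<alpha> > 0"
  shows "\<exists>N::nat. \<forall>(I::'i set) (\<psi>::'i \<Rightarrow> ('g::finite \<Rightarrow> int) \<Rightarrow> complex) c.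
     (\<forall>a\<in>I. \<forall>n. cmod (\<psi> a n) \<le> C * exp (- \<alpha> * lat_norm (n - c a))) \<and>
     (\<forall>a\<in>I. \<forall>b\<in>I. l2_inner (\<psi> a) (\<psi> b) = (if a = b then 1 else 0)) \<longrightarrow>
     (\<forall>p. finite {a\<in>I. c a = p} \<and> card {a\<in>I. c a = p} \<le> N)"
proof -
  have hs: "(\<lambda>d::'g \<Rightarrow> int. C^2 * exp (- (2*\<alpha>) * lat_norm d)) summable_on UNIV"
    by (intro summable_on_cmult_right summable_exp_lat_norm) (use alpha in simp)
  obtain F :: "('g \<Rightarrow> int) set" where F: "finite F" "infsum (\<lambda>d. C^2 * exp (- (2*\<alpha>) * lat_norm d)) (UNIV - F) \<le> 1/2"
    using infsum_small_tail[OF hs, of "1/2"] by auto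
  show ?thesis
  proof (intro exI allI impI)
    fix I :: "'i set" and \<psi> :: "'i \<Rightarrow> ('g \<Rightarrow> int) \<Rightarrow> complex" and c p
    assume "(\<forall>a\<in>I. \<forall>n. cmod (\<psi> a n) \<le> C * exp (- \<alpha> * lat_norm (n - c a))) \<and>
       (\<forall>a\<in>I. \<forall>b\<in>I. l2_inner (\<psi> a) (\<psi> b) = (if a = b then 1 else 0))"
    then have decay: "\<And>a n. a \<in> I \<Longrightarrow> cmod (\<psi> a n) \<le> C * exp (- \<alpha> * lat_norm (n - c a))"
      and ON: "\<And>a b. a \<in> I \<Longrightarrow> b \<in> I \<Longrightarrow> l2_inner (\<psi> a) (\<psi> b) = (if a = b then 1 else 0)"
      by auto
    have l2: "a \<in> I \<Longrightarrow> is_l2 (\<psi> a)" for a by (rule is_l2_exp_decay[OF alpha decay])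
    have card_le: "card K \<le> 2 * card F" if K: "finite K" "K \<subseteq> {a\<in>I. c a = p}" for K
    proof -
      have "card K \<le> 2 * card ((\<lambda>d. d + p) ` F)"
      proof (rule card_orthonormal_concentrated_le[OF K(1)])
        show "1/2 \<le> (\<Sum>n\<in>(\<lambda>d. d + p) ` F. (cmod (\<psi> a n))^2)" if "a \<in> K" for a
        proof -
          from that K have a: "a \<in> I" "c a = p" by auto
          show ?thesis
            by (rule localized_mass_near_centre[OF alpha l2[OF a(1)] ON[OF a(1) a(1), simplified] _ F(2,1)])
               (use decay[OF a(1)] a(2) in auto)
        qed
        show "l2_inner (\<psi> a) (\<psi> b) = (if a = b then 1 else 0)" if "a \<in> K" "b \<in> K" for a b
          using that K by (intro ON) auto
      qed (use K l2 F in auto)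
      also have "\<dots> \<le> 2 * card F" using card_image_le[OF F(1)] by simp
      finally show ?thesis .
    qed
    have "finite {a\<in>I. c a = p}"
    proof (rule ccontr)
      assume "infinite {a\<in>I. c a = p}"
      then obtain K where "finite K" "card K = 2 * card F + 1" "K \<subseteq> {a\<in>I. c a = p}"
        using infinite_arbitrarily_large by blast
      with card_le show False by fastforce
    qed
    with card_le show "finite {a\<in>I. c a = p} \<and> card {a\<in>I. c a = p} \<le> 2 * card F" by blast
  qed
qed

section \<open>Limits of Schr\<ouml>dinger operators with uniformly localized eigenvectors\<close>

lemma LIMSEQ_eventually_const_unique:
  fixes f :: "nat \<Rightarrow> 'a::t2_space"
  assumes "f \<longlonglongrightarrow> a" "\<And>j. j \<ge> K \<Longrightarrow> f j = b"
  shows "a = b"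
proof -
  have "eventually (\<lambda>j. f j = b) sequentially"
    using assms(2) by (rule eventually_sequentiallyI)
  then show ?thesis by (rule LIMSEQ_unique[OF assms(1) tendsto_eventually])
qed

lemma bounded_imp_convergent_subseq:
  fixes X :: "nat \<Rightarrow> 'k::countable \<Rightarrow> complex"
  assumes b: "\<And>k j. cmod (X j k) \<le> B k"
  shows "\<exists>r. strict_mono r \<and> (\<forall>k. convergent (\<lambda>j. X (r j) k))"
proof -
  define P where "P n s = convergent (\<lambda>j. X (s j) (from_nat n))" for n and s :: "nat \<Rightarrow> nat"
  interpret S: subseqs P
  proof
    fix n and s :: "nat \<Rightarrow> nat" assume s: "strict_mono s"
    have sc: "seq_compact (cball (0::complex) (B (from_nat n)))"
      by (rule compact_imp_seq_compact[OF compact_cball])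
    have "\<forall>j. X (s j) (from_nat n) \<in> cball 0 (B (from_nat n))" using b by auto
    then obtain l r where "l \<in> cball 0 (B (from_nat n))"
      and r: "strict_mono r" "((\<lambda>j. X (s j) (from_nat n)) \<circ> r) \<longlonglongrightarrow> l"
      by (rule seq_compactE[OF sc])
    then have "P n (s \<circ> r)" unfolding P_def convergent_def by (auto simp: o_def)
    with r show "\<exists>r'. strict_mono r' \<and> P n (s \<circ> r')" by blast
  qed
  have stable: "P n (s \<circ> r)" if "strict_mono r" "P n s" for r s n
  proof -
    from that(2) obtain l where "(\<lambda>j. X (s j) (from_nat n)) \<longlonglongrightarrow> l" unfolding P_def convergent_def by blast
    from LIMSEQ_subseq_LIMSEQ[OF this that(1)] show ?thesis unfolding P_def convergent_def by (auto simp: o_def)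
  qed
  have "convergent (\<lambda>j. X (S.diagseq j) k)" for k
  proof -
    have "P (to_nat k) (S.diagseq \<circ> (+) (Suc (to_nat k)))" by (rule S.diagseq_holds[OF stable])
    then have "convergent (\<lambda>j. X (S.diagseq (j + Suc (to_nat k))) k)"
      unfolding P_def by (simp add: o_def add.commute)
    then show ?thesis by (subst (asm) convergent_ignore_initial_segment)
  qed
  then show ?thesis using S.subseq_diagseq by blast
qed

lemma convergent_of_nat_eventually_const:
  assumes "convergent (\<lambda>j. complex_of_nat (a j))"
  shows "\<exists>M. \<forall>j\<ge>M. a j = a M"
proof -
  have "Cauchy (\<lambda>j. complex_of_nat (a j))" using assms by (rule convergent_Cauchy)
  then obtain M where M: "\<And>m n. m \<ge> M \<Longrightarrow> n \<ge> M \<Longrightarrow> dist (complex_of_nat (a m)) (complex_of_nat (a n)) < 1"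
    unfolding Cauchy_def by (meson zero_less_one)
  have "a j = a M" if "j \<ge> M" for j
  proof -
    have "dist (complex_of_nat (a j)) (complex_of_nat (a M)) < 1" using M[OF that order_refl] .
    then have "cmod (complex_of_nat (a j) - complex_of_nat (a M)) < 1" by (simp only: dist_norm)
    moreover have "complex_of_nat (a j) - complex_of_nat (a M) = complex_of_real (real (a j) - real (a M))" by simp
    ultimately have "\<bar>real (a j) - real (a M)\<bar> < 1" by (simp only: norm_of_real)
    then show ?thesis by linarith
  qed
  then show ?thesis by blast
qed

definition schr_pot :: "(('g::finite \<Rightarrow> int) \<Rightarrow> real) \<Rightarrow> (('g \<Rightarrow> int) \<Rightarrow> complex) \<Rightarrow> ('g \<Rightarrow> int) \<Rightarrow> complex" where
  "schr_pot V u n = (\<Sum>m\<in>{m. lat_norm (m - n) = 1}. u m) + complex_of_real (V n) * u n"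

lemma schr_op_eq_schr_pot: "schr_op T f \<omega> = schr_pot (\<lambda>n. f (tpow T n \<omega>))"
  by (intro ext) (simp add: schr_op_def schr_pot_def)

lemma schr_pot_tendsto:
  assumes "\<And>n. (\<lambda>j. Vs j n) \<longlonglongrightarrow> V n" "\<And>n. (\<lambda>j. u j n) \<longlonglongrightarrow> w n"
  shows "(\<lambda>j. schr_pot (Vs j) (u j) n) \<longlonglongrightarrow> schr_pot V w n"
  unfolding schr_pot_def by (intro tendsto_intros tendsto_sum assms)

lemma eigenvector_limit:
  assumes hl: "\<And>n. (\<lambda>j. schr_pot (Vs j) (u j) n) \<longlonglongrightarrow> schr_pot V w n"
    and ul: "\<And>n. (\<lambda>j. u j n) \<longlonglongrightarrow> w n"
    and ev: "\<And>j. j \<ge> K \<Longrightarrow> schr_pot (Vs j) (u j) = (\<lambda>n. e j * u j n)"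
    and nz: "w n0 \<noteq> 0"
  shows "\<exists>E. schr_pot V w = (\<lambda>n. E * w n)"
proof -
  have evn: "eventually (\<lambda>j. schr_pot (Vs j) (u j) n = e j * u j n) sequentially" for n
    unfolding eventually_sequentially by (intro exI[of _ K] allI impI) (simp add: ev)
  have eu: "(\<lambda>j. e j * u j n) \<longlonglongrightarrow> schr_pot V w n" for n
    by (rule Lim_transform_eventually[OF hl evn])
  have q: "(\<lambda>j. (e j * u j n0) / u j n0) \<longlonglongrightarrow> schr_pot V w n0 / w n0"
    by (rule tendsto_divide[OF eu ul nz])
  have "eventually (\<lambda>j. u j n0 \<noteq> 0) sequentially"
    by (rule tendsto_imp_eventually_ne[OF ul nz])
  then have "eventually (\<lambda>j. (e j * u j n0) / u j n0 = e j) sequentially"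
    by (rule eventually_mono) simp
  then have el: "e \<longlonglongrightarrow> schr_pot V w n0 / w n0"
    by (rule Lim_transform_eventually[OF q])
  show ?thesis
  proof (intro exI ext)
    fix n
    have "(\<lambda>j. e j * u j n) \<longlonglongrightarrow> schr_pot V w n0 / w n0 * w n" by (intro tendsto_mult el ul)
    from LIMSEQ_unique[OF eu this] show "schr_pot V w n = schr_pot V w n0 / w n0 * w n" .
  qed
qed

text \<open>The eigenvectors of the \<open>j\<close>-th operator are grouped by centre: \<open>\<Phi> j p i\<close> is the \<open>i\<close>-th one
  centred at \<open>p\<close> (or \<open>0\<close>), with at most \<open>N\<close> of them per centre. Along a diagonal subsequence \<open>sel\<close>
  all counts and all values converge; since the counts are integers they eventually stabilise, and
  the limits \<open>\<psi> p i\<close> form the eigenbasis of the limit operator.\<close>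

locale ULE_sequence =
  fixes Vs :: "nat \<Rightarrow> ('g::finite \<Rightarrow> int) \<Rightarrow> real" and V :: "('g \<Rightarrow> int) \<Rightarrow> real"
    and \<alpha> C :: real and \<phi> :: "nat \<Rightarrow> nat \<Rightarrow> ('g \<Rightarrow> int) \<Rightarrow> complex"
    and E :: "nat \<Rightarrow> nat \<Rightarrow> complex" and cc :: "nat \<Rightarrow> nat \<Rightarrow> 'g \<Rightarrow> int" and N :: nat
  assumes alpha: "\<alpha> > 0" and Cpos: "C > 0"
    and limV: "\<And>n. (\<lambda>j. Vs j n) \<longlonglongrightarrow> V n"
    and l2: "\<And>j k. is_l2 (\<phi> j k)"
    and ON: "\<And>j k k'. l2_inner (\<phi> j k) (\<phi> j k') = (if k = k' then 1 else 0)"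
    and complete: "\<And>j u. is_l2 u \<Longrightarrow> (\<forall>k. l2_inner (\<phi> j k) u = 0) \<Longrightarrow> u = (\<lambda>_. 0)"
    and eig: "\<And>j k. schr_pot (Vs j) (\<phi> j k) = (\<lambda>n. E j k * \<phi> j k n)"
    and decay: "\<And>j k m. cmod (\<phi> j k m) \<le> C * exp (- \<alpha> * lat_norm (m - cc j k))"
    and centre_mult: "\<And>j p. finite {k. cc j k = p} \<and> card {k. cc j k = p} \<le> N"
begin

lemma eigenbasis_localized_orthonormal: "localized_orthonormal_family UNIV (\<phi> j) (cc j) \<alpha> C N"
  by unfold_locales (use alpha Cpos decay centre_mult ON in auto)

definition ccount :: "nat \<Rightarrow> ('g \<Rightarrow> int) \<Rightarrow> nat" where
  "ccount j p = card {k. cc j k = p}"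

definition clist :: "nat \<Rightarrow> ('g \<Rightarrow> int) \<Rightarrow> nat list" where
  "clist j p = sorted_list_of_set {k. cc j k = p}"

definition cidx :: "nat \<Rightarrow> ('g \<Rightarrow> int) \<Rightarrow> nat \<Rightarrow> nat" where
  "cidx j p i = clist j p ! i"

definition \<Phi> :: "nat \<Rightarrow> ('g \<Rightarrow> int) \<Rightarrow> nat \<Rightarrow> ('g \<Rightarrow> int) \<Rightarrow> complex" where
  "\<Phi> j p i m = (if i < ccount j p then \<phi> j (cidx j p i) m else 0)"

lemma fibre_finite: "finite {k. cc j k = p}" using centre_mult by blast
lemma ccount_le: "ccount j p \<le> N" using centre_mult by (simp add: ccount_def)
lemma length_clist: "length (clist j p) = ccount j p" by (simp add: clist_def ccount_def fibre_finite)
lemma distinct_clist: "distinct (clist j p)" by (simp add: clist_def)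
lemma set_clist: "set (clist j p) = {k. cc j k = p}" by (simp add: clist_def fibre_finite)

lemma centre_cidx: "i < ccount j p \<Longrightarrow> cc j (cidx j p i) = p"
proof -
  assume "i < ccount j p"
  then have "cidx j p i \<in> set (clist j p)" by (simp add: cidx_def length_clist)
  then show ?thesis by (simp add: set_clist)
qed

lemma cidx_inj:
  assumes "i < ccount j p" "i' < ccount j p'" "cidx j p i = cidx j p' i'"
  shows "p = p' \<and> i = i'"
proof -
  have pp: "p = p'" using centre_cidx[OF assms(1)] centre_cidx[OF assms(2)] assms(3) by simp
  then have "clist j p ! i = clist j p ! i'" using assms(3) by (simp add: cidx_def)
  then have "i = i'" using assms(1,2) pp distinct_clist[of j p] by (simp add: length_clist nth_eq_iff_index_eq)
  with pp show ?thesis by simp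
qed

lemma Phi_decay: "cmod (\<Phi> j p i m) \<le> C * exp (- \<alpha> * lat_norm (m - p))"
  using decay[of j "cidx j p i" m] centre_cidx[of i j p] Cpos by (auto simp: \<Phi>_def)

lemma Phi_bounded: "cmod (\<Phi> j p i m) \<le> C"
  using Phi_decay[of j p i m] exp_neg_lat_norm_le_1[of \<alpha> "m - p"] alpha Cpos
  by (smt (verit) mult_left_le)

text \<open>All the data to be made convergent, as one countable family of bounded sequences.\<close>

definition coord :: "nat \<Rightarrow> ('g \<Rightarrow> int) + ('g \<Rightarrow> int) \<times> nat \<times> ('g \<Rightarrow> int) \<Rightarrow> complex" where
  "coord j k = (case k of Inl p \<Rightarrow> of_nat (ccount j p) | Inr (p, i, m) \<Rightarrow> \<Phi> j p i m)"

lemma ex_convergent_subseq: "\<exists>sel. strict_mono sel \<and> (\<forall>k. convergent (\<lambda>j. coord (sel j) k))"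
proof (rule bounded_imp_convergent_subseq[where B="\<lambda>k. case k of Inl p \<Rightarrow> real N | Inr _ \<Rightarrow> C"])
  fix k j
  show "cmod (coord j k) \<le> (case k of Inl p \<Rightarrow> real N | Inr _ \<Rightarrow> C)"
    using ccount_le Phi_bounded by (auto simp: coord_def split: sum.splits prod.splits)
qed

definition sel :: "nat \<Rightarrow> nat" where
  "sel = (SOME sel. strict_mono sel \<and> (\<forall>k. convergent (\<lambda>j. coord (sel j) k)))"

lemma sel: "strict_mono sel" "\<And>k. convergent (\<lambda>j. coord (sel j) k)"
  using someI_ex[OF ex_convergent_subseq] unfolding sel_def by blast+

lemma ccount_convergent: "convergent (\<lambda>j. complex_of_nat (ccount (sel j) p))"
  using sel(2)[of "Inl p"] by (simp add: coord_def)

definition settle :: "('g \<Rightarrow> int) \<Rightarrow> nat" where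
  "settle p = (SOME settle. \<forall>j\<ge>settle. ccount (sel j) p = ccount (sel settle) p)"
definition limit_count :: "('g \<Rightarrow> int) \<Rightarrow> nat" where
  "limit_count p = ccount (sel (settle p)) p"

lemma settle: "j \<ge> settle p \<Longrightarrow> ccount (sel j) p = limit_count p"
proof -
  have "\<exists>settle. \<forall>j\<ge>settle. ccount (sel j) p = ccount (sel settle) p" by (rule convergent_of_nat_eventually_const[OF ccount_convergent])
  from someI_ex[OF this] show "j \<ge> settle p \<Longrightarrow> ccount (sel j) p = limit_count p" unfolding settle_def limit_count_def by blast
qed

lemma limit_count_le: "limit_count p \<le> N" by (simp add: limit_count_def ccount_le)

definition \<psi> :: "('g \<Rightarrow> int) \<Rightarrow> nat \<Rightarrow> ('g \<Rightarrow> int) \<Rightarrow> complex" where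
  "\<psi> p i m = lim (\<lambda>j. \<Phi> (sel j) p i m)"

lemma Phi_tendsto: "(\<lambda>j. \<Phi> (sel j) p i m) \<longlonglongrightarrow> \<psi> p i m"
proof -
  have "convergent (\<lambda>j. \<Phi> (sel j) p i m)" using sel(2)[of "Inr (p, i, m)"] by (simp add: coord_def)
  then show ?thesis unfolding \<psi>_def by (simp add: convergent_LIMSEQ_iff)
qed

lemma psi_decay: "cmod (\<psi> p i m) \<le> C * exp (- \<alpha> * lat_norm (m - p))"
  by (rule tendsto_le[OF trivial_limit_sequentially tendsto_const tendsto_norm[OF Phi_tendsto]])
     (intro always_eventually allI Phi_decay)

lemma psi_zero: "i \<ge> limit_count p \<Longrightarrow> \<psi> p i m = 0"
  by (rule LIMSEQ_eventually_const_unique[OF Phi_tendsto, of "settle p"]) (simp add: \<Phi>_def settle)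

lemma Phi_eq_eigenvector: "i < limit_count p \<Longrightarrow> j \<ge> settle p \<Longrightarrow> \<Phi> (sel j) p i = \<phi> (sel j) (cidx (sel j) p i)"
  by (intro ext) (simp add: \<Phi>_def settle)

definition limit_index :: "(('g \<Rightarrow> int) \<times> nat) set" where
  "limit_index = {a. snd a < limit_count (fst a)}"
definition \<Psi> :: "('g \<Rightarrow> int) \<times> nat \<Rightarrow> ('g \<Rightarrow> int) \<Rightarrow> complex" where
  "\<Psi> a = \<psi> (fst a) (snd a)"

lemma l2_inner_Phi_tendsto:
  "(\<lambda>j. l2_inner (\<Phi> (sel j) p i) (\<Phi> (sel j) q i')) \<longlonglongrightarrow> l2_inner (\<psi> p i) (\<psi> q i')"
  unfolding l2_inner_def
proof (rule tendsto_infsum_dominated[where h="\<lambda>n. C^2 * exp (- \<alpha> * lat_norm (n - p))"])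
  show "(\<lambda>j. cnj (\<Phi> (sel j) p i n) * \<Phi> (sel j) q i' n) \<longlonglongrightarrow> cnj (\<psi> p i n) * \<psi> q i' n" for n
    by (intro tendsto_mult tendsto_cnj Phi_tendsto)
  show "(\<lambda>n. C^2 * exp (- \<alpha> * lat_norm (n - p))) summable_on UNIV"
    by (intro summable_on_cmult_right summable_exp_lat_norm_shift alpha)
  show "norm (cnj (\<Phi> (sel j) p i n) * \<Phi> (sel j) q i' n) \<le> C^2 * exp (- \<alpha> * lat_norm (n - p))" for j n
  proof -
    have "norm (cnj (\<Phi> (sel j) p i n) * \<Phi> (sel j) q i' n) = cmod (\<Phi> (sel j) p i n) * cmod (\<Phi> (sel j) q i' n)"
      by (simp add: norm_mult)
    also have "\<dots> \<le> (C * exp (- \<alpha> * lat_norm (n - p))) * C"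
      by (intro mult_mono Phi_decay Phi_bounded) (use Cpos in auto)
    finally show ?thesis by (simp add: power2_eq_square algebra_simps)
  qed
qed

lemma orthonormal_Psi:
  assumes a: "a \<in> limit_index" and b: "b \<in> limit_index"
  shows "l2_inner (\<Psi> a) (\<Psi> b) = (if a = b then 1 else 0)"
proof -
  obtain p i where a': "a = (p, i)" by (cases a)
  obtain q i' where b': "b = (q, i')" by (cases b)
  have ip: "i < limit_count p" and iq: "i' < limit_count q" using a b a' b' by (auto simp: limit_index_def)
  define K where "K = max (settle p) (settle q)"
  have "l2_inner (\<psi> p i) (\<psi> q i') = (if a = b then 1 else 0)"
  proof (rule LIMSEQ_eventually_const_unique[OF l2_inner_Phi_tendsto, of K])
    fix j assume j: "j \<ge> K"
    have jp: "j \<ge> settle p" and jq: "j \<ge> settle q" using j by (auto simp: K_def)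
    have cp: "i < ccount (sel j) p" and cq: "i' < ccount (sel j) q" using settle[OF jp] settle[OF jq] ip iq by auto
    have "l2_inner (\<Phi> (sel j) p i) (\<Phi> (sel j) q i') = l2_inner (\<phi> (sel j) (cidx (sel j) p i)) (\<phi> (sel j) (cidx (sel j) q i'))"
      by (simp add: Phi_eq_eigenvector[OF ip jp] Phi_eq_eigenvector[OF iq jq])
    also have "\<dots> = (if a = b then 1 else 0)"
      using cidx_inj[OF cp cq] by (auto simp: ON a' b')
    finally show "l2_inner (\<Phi> (sel j) p i) (\<Phi> (sel j) q i') = (if a = b then 1 else 0)" .
  qed
  then show ?thesis by (simp add: \<Psi>_def a' b')
qed

lemma Psi_centre_multiplicity: "finite {a\<in>limit_index. fst a = p} \<and> card {a\<in>limit_index. fst a = p} \<le> N"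
proof -
  have eq: "{a\<in>limit_index. fst a = p} = (\<lambda>i. (p, i)) ` {..<limit_count p}" by (auto simp: limit_index_def)
  have "card ((\<lambda>i. (p, i)) ` {..<limit_count p}) = limit_count p" by (subst card_image) (auto simp: inj_on_def)
  then show ?thesis unfolding eq using limit_count_le by simp
qed

sublocale limit: localized_orthonormal_family limit_index \<Psi> fst \<alpha> C N
proof
  show "\<alpha> > 0" by (rule alpha)
  show "C \<ge> 0" using Cpos by simp
  show "cmod (\<Psi> a n) \<le> C * exp (- \<alpha> * lat_norm (n - fst a))" for a n unfolding \<Psi>_def by (rule psi_decay)
  show "finite {a\<in>limit_index. fst a = p} \<and> card {a\<in>limit_index. fst a = p} \<le> N" for p by (rule Psi_centre_multiplicity)
  show "a \<in> limit_index \<Longrightarrow> b \<in> limit_index \<Longrightarrow> l2_inner (\<Psi> a) (\<Psi> b) = (if a = b then 1 else 0)" for a b by (rule orthonormal_Psi)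
qed

lemma parseval_eigenbasis: "infsum (\<lambda>k. (cmod (\<phi> j k m))^2) UNIV = 1"
  by (rule localized_orthonormal_family.parseval_of_complete[OF eigenbasis_localized_orthonormal])
     (use complete in blast)

lemma summable_sq_eigenbasis: "(\<lambda>k. (cmod (\<phi> j k m))^2) summable_on UNIV"
  using localized_orthonormal_family.summable_sq_members[OF eigenbasis_localized_orthonormal] .

lemma parseval_grouped: "infsum (\<lambda>k. (cmod (\<phi> j k m))^2) UNIV = infsum (\<lambda>p. \<Sum>i<N. (cmod (\<Phi> j p i m))^2) UNIV"
proof -
  have "infsum (\<lambda>k. (cmod (\<phi> j k m))^2) UNIV = infsum (\<lambda>p. sum (\<lambda>k. (cmod (\<phi> j k m))^2) {k. cc j k = p}) UNIV"
    by (rule infsum_by_fibres[OF summable_sq_eigenbasis fibre_finite])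
  also have "\<dots> = infsum (\<lambda>p. \<Sum>i<N. (cmod (\<Phi> j p i m))^2) UNIV"
  proof (rule infsum_cong)
    fix p
    have bij: "bij_betw (cidx j p) {..<ccount j p} {k. cc j k = p}"
    proof -
      have "bij_betw ((!) (clist j p)) {..<ccount j p} {k. cc j k = p}"
        by (rule bij_betw_nth) (simp_all add: distinct_clist length_clist set_clist)
      then show ?thesis by (simp add: cidx_def[abs_def])
    qed
    have "sum (\<lambda>k. (cmod (\<phi> j k m))^2) {k. cc j k = p} = (\<Sum>i<ccount j p. (cmod (\<phi> j (cidx j p i) m))^2)"
      by (rule sum.reindex_bij_betw[OF bij, symmetric])
    also have "\<dots> = (\<Sum>i<ccount j p. (cmod (\<Phi> j p i m))^2)"
      by (rule sum.cong) (simp_all add: \<Phi>_def)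
    also have "\<dots> = (\<Sum>i<N. (cmod (\<Phi> j p i m))^2)"
      by (rule sum.mono_neutral_left) (use ccount_le[of j p] in \<open>auto simp: \<Phi>_def\<close>)
    finally show "sum (\<lambda>k. (cmod (\<phi> j k m))^2) {k. cc j k = p} = (\<Sum>i<N. (cmod (\<Phi> j p i m))^2)" .
  qed
  finally show ?thesis .
qed

lemma parseval_psi: "infsum (\<lambda>p. \<Sum>i<N. (cmod (\<psi> p i m))^2) UNIV = 1"
proof -
  define h where "h p = real N * (C^2 * exp (- (2*\<alpha>) * lat_norm (p - m)))" for p
  have "(\<lambda>j. infsum (\<lambda>p. \<Sum>i<N. (cmod (\<Phi> (sel j) p i m))^2) UNIV)
      \<longlonglongrightarrow> infsum (\<lambda>p. \<Sum>i<N. (cmod (\<psi> p i m))^2) UNIV"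
  proof (rule tendsto_infsum_dominated[where h=h])
    show "(\<lambda>j. \<Sum>i<N. (cmod (\<Phi> (sel j) p i m))^2) \<longlonglongrightarrow> (\<Sum>i<N. (cmod (\<psi> p i m))^2)" for p
      by (intro tendsto_sum tendsto_power tendsto_norm Phi_tendsto)
    show "h summable_on UNIV" unfolding h_def
      by (intro summable_on_cmult_right summable_exp_lat_norm_shift) (use alpha in simp)
    show "norm (\<Sum>i<N. (cmod (\<Phi> (sel j) p i m))^2) \<le> h p" for j p
    proof -
      have "norm (\<Sum>i<N. (cmod (\<Phi> (sel j) p i m))^2) = (\<Sum>i<N. (cmod (\<Phi> (sel j) p i m))^2)"
        by (simp add: sum_nonneg)
      also have "\<dots> \<le> (\<Sum>i<N. C^2 * exp (- (2*\<alpha>) * lat_norm (m - p)))"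
        by (intro sum_mono power2_le_exp_bound Phi_decay)
      also have "\<dots> = h p" by (simp add: h_def lat_norm_minus_commute)
      finally show ?thesis .
    qed
  qed
  moreover have "infsum (\<lambda>p. \<Sum>i<N. (cmod (\<Phi> (sel j) p i m))^2) UNIV = 1" for j
    by (simp add: parseval_grouped[symmetric] parseval_eigenbasis)
  ultimately show ?thesis
    using LIMSEQ_unique[OF _ tendsto_const] by simp
qed

lemma parseval_Psi: "infsum (\<lambda>a. (cmod (\<Psi> a m))^2) limit_index = 1"
proof -
  have limit_index_Sigma: "limit_index = Sigma UNIV (\<lambda>p. {..<limit_count p})" by (auto simp: limit_index_def)
  have "(\<lambda>a. (cmod (\<Psi> a m))^2) summable_on Sigma UNIV (\<lambda>p. {..<limit_count p})"
    using limit.summable_sq_members[of m] by (simp add: limit_index_Sigma)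
  then have "infsum (\<lambda>a. (cmod (\<Psi> a m))^2) limit_index
      = infsum (\<lambda>p. infsum (\<lambda>i. (cmod (\<Psi> (p, i) m))^2) {..<limit_count p}) UNIV"
    unfolding limit_index_Sigma by (rule infsum_Sigma_banach[symmetric])
  also have "\<dots> = infsum (\<lambda>p. \<Sum>i<N. (cmod (\<psi> p i m))^2) UNIV"
  proof (rule infsum_cong)
    fix p
    have "(\<Sum>i<limit_count p. (cmod (\<psi> p i m))^2) = (\<Sum>i<N. (cmod (\<psi> p i m))^2)"
      by (rule sum.mono_neutral_left) (use limit_count_le[of p] psi_zero in auto)
    then show "infsum (\<lambda>i. (cmod (\<Psi> (p, i) m))^2) {..<limit_count p} = (\<Sum>i<N. (cmod (\<psi> p i m))^2)"
      by (simp add: \<Psi>_def)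
  qed
  also have "\<dots> = 1" by (rule parseval_psi)
  finally show ?thesis .
qed

lemma complete_Psi:
  assumes "is_l2 u" "\<forall>a\<in>limit_index. l2_inner (\<Psi> a) u = 0"
  shows "u = (\<lambda>_. 0)"
  by (rule limit.complete_of_parseval[OF parseval_Psi assms])

lemma eigenvector_Psi:
  assumes a: "a \<in> limit_index"
  shows "\<exists>Ea. schr_pot V (\<Psi> a) = (\<lambda>n. Ea * \<Psi> a n)"
proof -
  obtain p i where a': "a = (p, i)" by (cases a)
  have ip: "i < limit_count p" using a a' by (simp add: limit_index_def)
  have "\<exists>n0. \<psi> p i n0 \<noteq> 0"
  proof (rule ccontr)
    assume "\<not> (\<exists>n0. \<psi> p i n0 \<noteq> 0)"
    then have "\<Psi> a = (\<lambda>_. 0)" by (auto simp: \<Psi>_def a')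
    then have "l2_inner (\<Psi> a) (\<Psi> a) = 0" by (simp add: l2_inner_def)
    with orthonormal_Psi[OF a a] show False by simp
  qed
  then obtain n0 where nz: "\<psi> p i n0 \<noteq> 0" by blast
  have limVr: "(\<lambda>j. Vs (sel j) n) \<longlonglongrightarrow> V n" for n
    using LIMSEQ_subseq_LIMSEQ[OF limV sel(1)] by (simp add: o_def)
  have "\<exists>E'. schr_pot V (\<psi> p i) = (\<lambda>n. E' * \<psi> p i n)"
  proof (rule eigenvector_limit[where Vs="\<lambda>j. Vs (sel j)" and u="\<lambda>j. \<Phi> (sel j) p i" and e="\<lambda>j. E (sel j) (cidx (sel j) p i)" and K="settle p"])
    show "(\<lambda>j. schr_pot (Vs (sel j)) (\<Phi> (sel j) p i) n) \<longlonglongrightarrow> schr_pot V (\<psi> p i) n" for n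
      by (rule schr_pot_tendsto[OF limVr Phi_tendsto])
    show "(\<lambda>j. \<Phi> (sel j) p i n) \<longlonglongrightarrow> \<psi> p i n" for n by (rule Phi_tendsto)
    show "schr_pot (Vs (sel j)) (\<Phi> (sel j) p i) = (\<lambda>n. E (sel j) (cidx (sel j) p i) * \<Phi> (sel j) p i n)" if "j \<ge> settle p" for j
      using Phi_eq_eigenvector[OF ip that] eig by simp
    show "\<psi> p i n0 \<noteq> 0" by (rule nz)
  qed
  then show ?thesis by (simp add: \<Psi>_def[abs_def] a')
qed

lemma infinite_limit_index: "infinite limit_index"
proof
  assume fin: "finite limit_index"
  have "inj (\<lambda>k::nat. (\<lambda>_::'g. int k))"
    by (rule injI) (metis of_nat_eq_iff)
  then have "infinite (UNIV :: ('g \<Rightarrow> int) set)"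
    using finite_imageD infinite_UNIV_nat infinite_super[OF subset_UNIV] by blast
  then obtain B :: "('g \<Rightarrow> int) set" where B: "finite B" "card B = card limit_index + 1"
    using infinite_arbitrarily_large by blast
  have mass_le_1: "(\<Sum>m\<in>B. (cmod (\<Psi> a m))^2) \<le> 1" if a: "a \<in> limit_index" for a
  proof -
    have "(\<Sum>m\<in>B. (cmod (\<Psi> a m))^2) \<le> infsum (\<lambda>n. (cmod (\<Psi> a n))^2) UNIV"
      using limit.member_is_l2[OF a] B(1) by (intro finite_sum_le_infsum) (auto simp: is_l2_def)
    also have "\<dots> = 1"
      using unit_l2_norm_sq[OF limit.member_is_l2[OF a]] orthonormal_Psi[OF a a] by simp
    finally show ?thesis .
  qed
  have "real (card B) = (\<Sum>m\<in>B. \<Sum>a\<in>limit_index. (cmod (\<Psi> a m))^2)"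
    using parseval_Psi fin by simp
  also have "\<dots> = (\<Sum>a\<in>limit_index. \<Sum>m\<in>B. (cmod (\<Psi> a m))^2)" by (rule sum.swap)
  also have "\<dots> \<le> real (card limit_index)"
    using sum_mono[of limit_index _ "\<lambda>_. 1", OF mass_le_1] by simp
  finally show False using B(2) by simp
qed

lemma ULE_const_limit: "ULE_const \<alpha> C (schr_pot V)"
proof -
  have "countable limit_index" by (rule countableI_type)
  then obtain e where e: "bij_betw e (UNIV :: nat set) limit_index"
    using infinite_limit_index countable_infiniteE' by blast
  have "\<forall>a\<in>limit_index. \<exists>Ea. schr_pot V (\<Psi> a) = (\<lambda>n. Ea * \<Psi> a n)" using eigenvector_Psi by blast
  then obtain Ef where Ef: "\<And>a. a \<in> limit_index \<Longrightarrow> schr_pot V (\<Psi> a) = (\<lambda>n. Ef a * \<Psi> a n)"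
    by (metis bchoice)
  have eI: "e k \<in> limit_index" for k using e by (auto simp: bij_betw_def)
  have einj: "e k = e k' \<longleftrightarrow> k = k'" for k k'
    using e by (auto simp: bij_betw_def inj_on_def)
  have esurj: "a \<in> limit_index \<Longrightarrow> \<exists>k. a = e k" for a
    using e by (auto simp: bij_betw_def)
  show ?thesis
    unfolding ULE_const_def
  proof (intro exI conjI allI impI)
    show "is_l2 (\<Psi> (e k))" for k by (rule limit.member_is_l2[OF eI])
    show "l2_inner (\<Psi> (e k)) (\<Psi> (e k')) = (if k = k' then 1 else 0)" for k k'
      using orthonormal_Psi[OF eI eI] einj by simp
    show "u = (\<lambda>_. 0)" if "is_l2 u \<and> (\<forall>k. l2_inner (\<Psi> (e k)) u = 0)" for u
      by (rule complete_Psi) (use that esurj in blast)+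
    show "schr_pot V (\<Psi> (e k)) = (\<lambda>n. Ef (e k) * \<Psi> (e k) n)" for k by (rule Ef[OF eI])
    show "cmod (\<Psi> (e k) m) \<le> C * exp (- \<alpha> * lat_norm (m - fst (e k)))" for k m
      unfolding \<Psi>_def by (rule psi_decay)
  qed
qed

end

lemma ULE_const_pointwise_limit:
  fixes Vs :: "nat \<Rightarrow> ('g::finite \<Rightarrow> int) \<Rightarrow> real" and V
  assumes alpha: "\<alpha> > 0" and Cpos: "C > 0"
    and limV: "\<And>n. (\<lambda>j. Vs j n) \<longlonglongrightarrow> V n"
    and ule: "\<And>j. ULE_const \<alpha> C (schr_pot (Vs j))"
  shows "ULE_const \<alpha> C (schr_pot V)"
proof -
  define Q where "Q j \<phi> E c \<longleftrightarrow> (\<forall>k. is_l2 (\<phi> k)) \<and>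
       (\<forall>k j. l2_inner (\<phi> k) (\<phi> j) = (if k = j then 1 else 0)) \<and>
       (\<forall>u. is_l2 u \<and> (\<forall>k. l2_inner (\<phi> k) u = 0) \<longrightarrow> u = (\<lambda>_. 0)) \<and>
       (\<forall>k. schr_pot (Vs j) (\<phi> k) = (\<lambda>n. E k * \<phi> k n)) \<and>
       (\<forall>k m. cmod (\<phi> k m) \<le> C * exp (- \<alpha> * lat_norm (m - c k)))"
    for j and \<phi> :: "nat \<Rightarrow> ('g \<Rightarrow> int) \<Rightarrow> complex" and E :: "nat \<Rightarrow> complex" and c :: "nat \<Rightarrow> 'g \<Rightarrow> int"
  have "\<forall>j. \<exists>\<phi> E c. Q j \<phi> E c" using ule unfolding ULE_const_def Q_def by blast
  then obtain \<phi> where "\<forall>j. \<exists>E c. Q j (\<phi> j) E c" by (rule choice[THEN exE]) blast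
  then obtain E where "\<forall>j. \<exists>c. Q j (\<phi> j) (E j) c" by (rule choice[THEN exE]) blast
  then obtain cc where Q: "\<forall>j. Q j (\<phi> j) (E j) (cc j)" by (rule choice[THEN exE]) blast
  obtain N where N: "\<forall>(I::nat set) (\<psi>::nat \<Rightarrow> ('g \<Rightarrow> int) \<Rightarrow> complex) c.
     (\<forall>a\<in>I. \<forall>n. cmod (\<psi> a n) \<le> C * exp (- \<alpha> * lat_norm (n - c a))) \<and>
     (\<forall>a\<in>I. \<forall>b\<in>I. l2_inner (\<psi> a) (\<psi> b) = (if a = b then 1 else 0)) \<longrightarrow>
     (\<forall>p. finite {a\<in>I. c a = p} \<and> card {a\<in>I. c a = p} \<le> N)"
    using centre_multiplicity_bound[OF alpha, of C] by auto
  interpret L: ULE_sequence Vs V \<alpha> C \<phi> E cc N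
  proof
    show "\<alpha> > 0" "C > 0" by (rule alpha, rule Cpos)
    show "(\<lambda>j. Vs j n) \<longlonglongrightarrow> V n" for n by (rule limV)
    show "is_l2 (\<phi> j k)" for j k using Q by (simp add: Q_def)
    show "l2_inner (\<phi> j k) (\<phi> j k') = (if k = k' then 1 else 0)" for j k k' using Q by (simp add: Q_def)
    show "is_l2 u \<Longrightarrow> \<forall>k. l2_inner (\<phi> j k) u = 0 \<Longrightarrow> u = (\<lambda>_. 0)" for j u using Q by (simp add: Q_def)
    show "schr_pot (Vs j) (\<phi> j k) = (\<lambda>n. E j k * \<phi> j k n)" for j k using Q by (simp add: Q_def)
    show "cmod (\<phi> j k m) \<le> C * exp (- \<alpha> * lat_norm (m - cc j k))" for j k m using Q by (simp add: Q_def)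
    show "finite {k. cc j k = p} \<and> card {k. cc j k = p} \<le> N" for j p
      using N[rule_format, of UNIV "\<phi> j" "cc j" p] Q by (simp add: Q_def)
  qed
  show ?thesis by (rule L.ULE_const_limit)
qed

section \<open>The \<open>\<int>\<^sup>\<gamma>\<close>-action\<close>

lemma zpow_0[simp]: "zpow h 0 x = x" by (simp add: zpow_def)
lemma zpow_1: "zpow h 1 = h" by (simp add: zpow_def)

lemma zpow_succ:
  assumes b: "bij h"
  shows "zpow h (k + 1) x = h (zpow h k x)"
proof (cases "k \<ge> 0")
  case True
  then have "nat (k + 1) = Suc (nat k)" by simp
  with True show ?thesis by (simp add: zpow_def)
next
  case False
  then have nk: "nat (- k) = Suc (nat (- (k + 1)))" by simp
  have hi: "h (inv h y) = y" for y using b by (simp add: bij_is_surj surj_f_inv_f)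
  have "zpow h k x = inv h ((inv h ^^ nat (- (k + 1))) x)"
    using False by (simp add: zpow_def nk)
  then have "h (zpow h k x) = (inv h ^^ nat (- (k + 1))) x" by (simp add: hi)
  also have "\<dots> = zpow h (k + 1) x"
    using False by (cases "k + 1 = 0") (auto simp: zpow_def)
  finally show ?thesis by simp
qed

lemma zpow_pred:
  assumes b: "bij h"
  shows "zpow h (k - 1) x = inv h (zpow h k x)"
proof -
  have "zpow h k x = h (zpow h (k - 1) x)" using zpow_succ[OF b, of "k - 1" x] by simp
  then show ?thesis using b by (simp add: bij_is_inj)
qed

lemma zpow_add:
  assumes b: "bij h"
  shows "zpow h a (zpow h c x) = zpow h (a + c) x"
proof (induction a rule: int_induct[where k=0])
  case base then show ?case by simp
next
  case (step1 i)
  then have IH: "zpow h i (zpow h c x) = zpow h (i + c) x" by blast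
  have e: "i + 1 + c = (i + c) + 1" by simp
  show ?case unfolding e zpow_succ[OF b] IH ..
next
  case (step2 i)
  then have IH: "zpow h i (zpow h c x) = zpow h (i + c) x" by blast
  have e: "i - 1 + c = (i + c) - 1" by simp
  show ?case unfolding e zpow_pred[OF b] IH ..
qed

lemma inv_commute:
  assumes b: "bij h" and c: "\<And>y. h (q y) = q (h y)"
  shows "inv h (q y) = q (inv h y)"
proof -
  have hi: "h (inv h y) = y" for y using b by (simp add: bij_is_surj surj_f_inv_f)
  have ih: "inv h (h y) = y" for y using b by (simp add: bij_is_inj)
  have "h (q (inv h y)) = q y" by (simp add: c hi)
  then have "inv h (h (q (inv h y))) = inv h (q y)" by simp
  then show ?thesis by (simp add: ih)
qed

lemma zpow_commute:
  assumes b: "bij h" and c: "\<And>y. h (q y) = q (h y)"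
  shows "zpow h a (q x) = q (zpow h a x)"
proof (induction a arbitrary: x rule: int_induct[where k=0])
  case base then show ?case by simp
next
  case (step1 i)
  then have IH: "\<And>x. zpow h i (q x) = q (zpow h i x)" by blast
  show ?case by (simp add: zpow_succ[OF b] IH c)
next
  case (step2 i)
  then have IH: "\<And>x. zpow h i (q x) = q (zpow h i x)" by blast
  show ?case by (simp add: zpow_pred[OF b] IH inv_commute[of h q, OF b c])
qed

lemma zpow_commute_zpow:
  assumes bh: "bij h" and bg: "bij g" and c: "\<And>y. h (g y) = g (h y)"
  shows "zpow h a (zpow g d x) = zpow g d (zpow h a x)"
proof -
  have "zpow g d (h y) = h (zpow g d y)" for y by (rule zpow_commute[OF bg]) (simp add: c)
  then show ?thesis by (intro zpow_commute[OF bh]) simp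
qed

definition comp_list :: "'i list \<Rightarrow> ('i \<Rightarrow> 'a \<Rightarrow> 'a) \<Rightarrow> 'a \<Rightarrow> 'a" where
  "comp_list xs F = foldr (\<lambda>i g. F i \<circ> g) xs id"

lemma comp_list_simps[simp]: "comp_list [] F x = x" "comp_list (y # xs) F x = F y (comp_list xs F x)"
  by (simp_all add: comp_list_def)

lemma comp_list_commute: "(\<And>i y. F i (q y) = q (F i y)) \<Longrightarrow> comp_list xs F (q x) = q (comp_list xs F x)"
  by (induction xs) simp_all

lemma comp_list_mult:
  assumes c: "\<And>i j y. F i (G j y) = G j (F i y)"
  shows "comp_list xs F (comp_list xs G x) = comp_list xs (\<lambda>i y. F i (G i y)) x"
proof (induction xs)
  case Nil then show ?case by simp
next
  case (Cons y xs)
  have cc: "comp_list xs F (G y z) = G y (comp_list xs F z)" for z by (rule comp_list_commute) (rule c)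
  show ?case using Cons by (simp add: cc)
qed

lemma comp_list_id: "comp_list xs (\<lambda>_ y. y) x = x" by (induction xs) simp_all

lemma comp_list_single: "distinct xs \<Longrightarrow> comp_list xs (\<lambda>j y. if j = i then h y else y) x = (if i \<in> set xs then h x else x)"
  by (induction xs) (auto simp: comp_list_id)

definition univ_list :: "'g::finite list" where
  "univ_list = (SOME xs. distinct xs \<and> set xs = UNIV)"

lemma univ_list: "distinct (univ_list::'g::finite list)" "set (univ_list::'g list) = UNIV"
proof -
  have fU: "finite (UNIV::'g set)" by simp
  have "\<exists>xs::'g list. distinct xs \<and> set xs = UNIV" using finite_distinct_list[OF fU] by auto
  from someI_ex[OF this] show "distinct (univ_list::'g list)" "set (univ_list::'g list) = UNIV" unfolding univ_list_def by blast+
qed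

lemma tpow_comp_list: "tpow T n x = comp_list univ_list (\<lambda>i. zpow (T i) (n i)) x"
  by (simp add: tpow_def comp_list_def univ_list_def)

definition lattice_unit :: "'g \<Rightarrow> 'g \<Rightarrow> int" where
  "lattice_unit i = (\<lambda>j. if j = i then 1 else 0)"

locale zaction =
  fixes T :: "'g::finite \<Rightarrow> 'a \<Rightarrow> 'a"
  assumes bijT: "\<And>i. bij (T i)" and commT: "\<And>i j y. T i (T j y) = T j (T i y)"
begin

lemma tpow_add: "tpow T n (tpow T m x) = tpow T (n + m) x"
proof -
  have c: "zpow (T i) (n i) (zpow (T j) (m j) y) = zpow (T j) (m j) (zpow (T i) (n i) y)" for i j y
  proof (rule zpow_commute_zpow)
    show "bij (T i)" "bij (T j)" by (rule bijT)+
    show "T i (T j z) = T j (T i z)" for z by (rule commT)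
  qed
  have "comp_list univ_list (\<lambda>i. zpow (T i) (n i)) (comp_list univ_list (\<lambda>i. zpow (T i) (m i)) x) = comp_list univ_list (\<lambda>i y. zpow (T i) (n i) (zpow (T i) (m i) y)) x"
    by (rule comp_list_mult[where F="\<lambda>i. zpow (T i) (n i)" and G="\<lambda>i. zpow (T i) (m i)", OF c])
  then have "tpow T n (tpow T m x) = comp_list univ_list (\<lambda>i y. zpow (T i) (n i) (zpow (T i) (m i) y)) x"
    by (simp only: tpow_comp_list)
  also have "\<dots> = tpow T (n + m) x"
    unfolding tpow_comp_list by (simp add: zpow_add[OF bijT])
  finally show ?thesis .
qed

lemma tpow_zero: "tpow T 0 x = x"
proof -
  have "(\<lambda>i. zpow (T i) ((0::'g \<Rightarrow> int) i)) = (\<lambda>i y. y)" by (simp add: fun_eq_iff zero_fun_def)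
  then show ?thesis unfolding tpow_comp_list by (simp add: comp_list_id)
qed

lemma tpow_lattice_unit: "tpow T (lattice_unit i) x = T i x"
proof -
  have "(\<lambda>j. zpow (T j) (lattice_unit i j)) = (\<lambda>j y. if j = i then T i y else y)"
    by (auto simp: lattice_unit_def zpow_1 fun_eq_iff)
  then show ?thesis unfolding tpow_comp_list by (simp add: comp_list_single univ_list)
qed

end

lemma continuous_on_funpow:
  fixes h :: "'a::topological_space \<Rightarrow> 'a"
  shows "continuous_on UNIV h \<Longrightarrow> continuous_on UNIV (h ^^ n)"
proof (induction n)
  case 0
  have "h ^^ 0 = (\<lambda>x. x)" by (simp add: fun_eq_iff)
  then show ?case by (simp only: continuous_on_id)
next
  case (Suc n)
  have "continuous_on UNIV (\<lambda>x. h ((h ^^ n) x))"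
    by (rule continuous_on_compose2[OF Suc.prems Suc.IH[OF Suc.prems]]) auto
  then show ?case by (simp add: o_def)
qed

lemma continuous_on_comp_list: "(\<And>i. continuous_on UNIV (F i)) \<Longrightarrow> continuous_on UNIV (comp_list xs F)"
proof (induction xs)
  case Nil
  have "comp_list [] F = id" by (simp add: fun_eq_iff)
  then show ?case by (simp add: continuous_on_id)
next
  case (Cons y xs)
  have "continuous_on UNIV (\<lambda>x. F y (comp_list xs F x))"
    by (rule continuous_on_compose2[OF Cons.prems Cons.IH[OF Cons.prems]]) auto
  moreover have "comp_list (y # xs) F = (\<lambda>x. F y (comp_list xs F x))" by (simp add: fun_eq_iff)
  ultimately show ?case by simp
qed

lemma continuous_on_tpow:
  assumes homeo: "\<And>i. homeomorphism UNIV UNIV (T i) (g i)"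
  shows "continuous_on UNIV (tpow T n)"
proof -
  have inv_T: "inv (T i) = g i" for i
    using homeo[of i] by (intro inv_unique_comp) (auto simp: homeomorphism_def fun_eq_iff)
  have "continuous_on UNIV (zpow (T i) k)" for i k
    using homeo[of i] by (cases "0 \<le> k") (simp_all add: zpow_def inv_T continuous_on_funpow homeomorphism_def)
  moreover have "tpow T n = comp_list univ_list (\<lambda>i. zpow (T i) (n i))"
    by (simp add: fun_eq_iff tpow_comp_list)
  ultimately show ?thesis by (simp add: continuous_on_comp_list)
qed

lemma zaction_of_homeomorphisms:
  assumes "\<And>i. homeomorphism UNIV UNIV (T i) (g i)" and "\<forall>i j. T i \<circ> T j = T j \<circ> T i"
  shows "zaction T"
proof
  show "bij (T i)" for i
    using assms(1)[of i] by (intro o_bij[where g="g i"]) (auto simp: homeomorphism_def fun_eq_iff)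
  show "T i (T j y) = T j (T i y)" for i j y
    using assms(2) by (metis comp_apply)
qed

section \<open>Uniform localization along orbits, in the limit, and almost everywhere\<close>

lemma is_l2_shift_iff: "is_l2 (\<lambda>m. u (m + n)) \<longleftrightarrow> is_l2 u"
  using summable_on_plus_shift_iff[of "\<lambda>m. (cmod (u m))^2" n] by (simp add: is_l2_def)

lemma l2_inner_shift: "l2_inner (\<lambda>m. u (m + n)) w = l2_inner u (\<lambda>m. w (m - n))"
  unfolding l2_inner_def using infsum_plus_shift[of "\<lambda>m. cnj (u m) * w (m - n)" n] by simp

lemma schr_pot_shift: "schr_pot (\<lambda>m. V (m + n)) (\<lambda>m. u (m + n)) x = schr_pot V u (x + n)"
proof -
  have "bij_betw (\<lambda>m. m + n) {m. lat_norm (m - x) = 1} {m. lat_norm (m - (x + n)) = 1}"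
    by (rule bij_betwI[where g="\<lambda>m. m - n"]) (auto simp: algebra_simps)
  then have "(\<Sum>m\<in>{m. lat_norm (m - x) = 1}. u (m + n)) = (\<Sum>m\<in>{m. lat_norm (m - (x + n)) = 1}. u m)"
    by (rule sum.reindex_bij_betw)
  then show ?thesis by (simp add: schr_pot_def)
qed

lemma ULE_const_shift:
  fixes V :: "('g::finite \<Rightarrow> int) \<Rightarrow> real"
  assumes "ULE_const \<alpha> C (schr_pot V)"
  shows "ULE_const \<alpha> C (schr_pot (\<lambda>m. V (m + n)))"
proof -
  from assms obtain \<phi> :: "nat \<Rightarrow> ('g \<Rightarrow> int) \<Rightarrow> complex" and E :: "nat \<Rightarrow> complex" and c where
    l2: "\<forall>k. is_l2 (\<phi> k)" and
    ON: "\<forall>k j. l2_inner (\<phi> k) (\<phi> j) = (if k = j then 1 else 0)" and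
    compl: "\<forall>u. is_l2 u \<and> (\<forall>k. l2_inner (\<phi> k) u = 0) \<longrightarrow> u = (\<lambda>_. 0)" and
    eig: "\<forall>k. schr_pot V (\<phi> k) = (\<lambda>x. E k * \<phi> k x)" and
    decay: "\<forall>k m. cmod (\<phi> k m) \<le> C * exp (- \<alpha> * lat_norm (m - c k))"
    unfolding ULE_const_def by (elim exE conjE) blast
  show ?thesis
    unfolding ULE_const_def
  proof (intro exI[of _ "\<lambda>k m. \<phi> k (m + n)"] exI[of _ E] exI[of _ "\<lambda>k. c k - n"] conjI allI impI)
    show "is_l2 (\<lambda>m. \<phi> k (m + n))" for k using l2 by (simp add: is_l2_shift_iff)
    show "l2_inner (\<lambda>m. \<phi> k (m + n)) (\<lambda>m. \<phi> j (m + n)) = (if k = j then 1 else 0)" for k j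
      using ON by (simp add: l2_inner_shift)
    show "w = (\<lambda>_. 0)" if w: "is_l2 w \<and> (\<forall>k. l2_inner (\<lambda>m. \<phi> k (m + n)) w = 0)" for w
    proof -
      have "is_l2 (\<lambda>m. w (m - n))"
        using w is_l2_shift_iff[of "\<lambda>m. w (m - n)" n] by simp
      then have "(\<lambda>m. w (m - n)) = (\<lambda>_. 0)" using compl w by (simp add: l2_inner_shift)
      then show ?thesis by (metis (no_types) add_diff_cancel)
    qed
    show "schr_pot (\<lambda>m. V (m + n)) (\<lambda>m. \<phi> k (m + n)) = (\<lambda>x. E k * \<phi> k (x + n))" for k
      using eig by (simp add: schr_pot_shift fun_eq_iff)
    show "cmod (\<phi> k (m + n)) \<le> C * exp (- \<alpha> * lat_norm (m - (c k - n)))" for k m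
      using decay by (simp add: algebra_simps)
  qed
qed

lemma ULE_const_mono:
  assumes u: "ULE_const \<alpha> C H" and a: "0 \<le> \<alpha>'" "\<alpha>' \<le> \<alpha>" and c: "C \<le> C'"
  shows "ULE_const \<alpha>' C' H"
proof -
  have b: "C * exp (- \<alpha> * lat_norm x) \<le> C' * exp (- \<alpha>' * lat_norm x)" if C0: "0 \<le> C" for x
  proof -
    have "\<alpha>' * lat_norm x \<le> \<alpha> * lat_norm x" using a lat_norm_nonneg[of x] by (intro mult_right_mono) auto
    then have "exp (- \<alpha> * lat_norm x) \<le> exp (- \<alpha>' * lat_norm x)" by simp
    then show ?thesis using c C0 by (intro mult_mono) auto
  qed
  from u show ?thesis unfolding ULE_const_def
  proof (elim exE conjE, intro exI conjI)
    fix \<phi> :: "nat \<Rightarrow> _" and E c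
    assume d: "\<forall>k m. cmod (\<phi> k m) \<le> C * exp (- \<alpha> * lat_norm (m - c k))"
    have C0: "0 \<le> C" using d[rule_format, of 0 0] by (smt (verit) norm_ge_zero exp_gt_zero mult_neg_pos)
    show "\<forall>k m. cmod (\<phi> k m) \<le> C' * exp (- \<alpha>' * lat_norm (m - c k))"
      using d b[OF C0] order_trans by blast
  qed
qed

lemma has_ULE_imp_ULE_const_nat:
  assumes "has_ULE H"
  shows "\<exists>k::nat. ULE_const (1 / (real k + 1)) (real k + 1) H"
proof -
  obtain \<alpha> C where \<alpha>: "\<alpha> > 0" and "ULE_const \<alpha> C H"
    using assms unfolding has_ULE_def by blast
  define k where "k = nat \<lceil>max (1/\<alpha>) C\<rceil>"
  have "1 / \<alpha> \<le> real k" and "C \<le> real k" unfolding k_def by linarith+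
  then have "1 / (real k + 1) \<le> \<alpha>" and "C \<le> real k + 1"
    using \<alpha> by (simp_all add: field_simps)
  then have "ULE_const (1 / (real k + 1)) (real k + 1) H"
    using ULE_const_mono[OF \<open>ULE_const \<alpha> C H\<close>, of "1 / (real k + 1)" "real k + 1"] by simp
  then show ?thesis ..
qed

lemma ULE_const_closure:
  fixes T :: "'g::finite \<Rightarrow> 'a::metric_space \<Rightarrow> 'a"
  assumes \<alpha>: "\<alpha> > 0" and C: "C > 0"
    and tpow_cont: "\<And>n. continuous_on UNIV (tpow T n)" and f_cont: "\<And>x. isCont f x"
    and ULE: "\<And>x. x \<in> D \<Longrightarrow> ULE_const \<alpha> C (schr_op T f x)" and \<omega>: "\<omega> \<in> closure D"
  shows "ULE_const \<alpha> C (schr_op T f \<omega>)"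
proof -
  from \<omega> obtain x where x: "\<forall>j. x j \<in> D" "x \<longlonglongrightarrow> \<omega>"
    unfolding closure_sequential by blast
  have "(\<lambda>j. f (tpow T n (x j))) \<longlonglongrightarrow> f (tpow T n \<omega>)" for n
  proof (rule isCont_tendsto_compose[OF f_cont], rule isCont_tendsto_compose[OF _ x(2)])
    show "isCont (tpow T n) \<omega>"
      using tpow_cont[of n] by (simp add: continuous_on_eq_continuous_at)
  qed
  then have "ULE_const \<alpha> C (schr_pot (\<lambda>n. f (tpow T n \<omega>)))"
    by (rule ULE_const_pointwise_limit[OF \<alpha> C])
       (use ULE x(1) in \<open>simp add: schr_op_eq_schr_pot\<close>)
  then show ?thesis by (simp add: schr_op_eq_schr_pot)
qed

definition zorbit :: "('g::finite \<Rightarrow> 'a \<Rightarrow> 'a) \<Rightarrow> 'a set \<Rightarrow> 'a set" where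
  "zorbit T A = {tpow T n x | n x. x \<in> A}"

context zaction
begin

lemma subset_zorbit: "A \<subseteq> zorbit T A"
proof
  fix x assume "x \<in> A"
  moreover have "x = tpow T 0 x" by (simp add: tpow_zero)
  ultimately show "x \<in> zorbit T A" unfolding zorbit_def by blast
qed

lemma tpow_in_zorbit:
  assumes "x \<in> zorbit T A"
  shows "tpow T n x \<in> zorbit T A"
proof -
  obtain m y where "x = tpow T m y" "y \<in> A" using assms unfolding zorbit_def by blast
  then have "tpow T n x = tpow T (n + m) y" "y \<in> A" by (simp_all add: tpow_add)
  then show ?thesis unfolding zorbit_def by blast
qed

lemma ULE_const_zorbit:
  assumes ULE: "\<And>x. x \<in> A \<Longrightarrow> ULE_const \<alpha> C (schr_op T f x)" and \<omega>: "\<omega> \<in> zorbit T A"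
  shows "ULE_const \<alpha> C (schr_op T f \<omega>)"
proof -
  obtain n x where \<omega>_eq: "\<omega> = tpow T n x" and "x \<in> A" using \<omega> unfolding zorbit_def by blast
  then have "ULE_const \<alpha> C (schr_pot (\<lambda>m. f (tpow T (m + n) x)))"
    using ULE_const_shift[of \<alpha> C "\<lambda>m. f (tpow T m x)" n] ULE by (simp add: schr_op_eq_schr_pot)
  then show ?thesis by (simp add: schr_op_eq_schr_pot \<omega>_eq tpow_add)
qed

lemma has_ULE_subset_UN_zorbit:
  assumes "\<And>\<omega>. \<omega> \<in> S \<Longrightarrow> has_ULE (H \<omega>)"
  shows "S \<subseteq> (\<Union>k::nat. zorbit T {\<omega>\<in>S. ULE_const (1 / (real k + 1)) (real k + 1) (H \<omega>)})"
proof
  fix \<omega> assume "\<omega> \<in> S"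
  then obtain k where "ULE_const (1 / (real k + 1)) (real k + 1) (H \<omega>)"
    using has_ULE_imp_ULE_const_nat[OF assms] by blast
  with \<open>\<omega> \<in> S\<close> have "\<omega> \<in> zorbit T {\<omega>\<in>S. ULE_const (1 / (real k + 1)) (real k + 1) (H \<omega>)}"
    using subset_zorbit[of "{\<omega>\<in>S. ULE_const (1 / (real k + 1)) (real k + 1) (H \<omega>)}"] by blast
  then show "\<omega> \<in> (\<Union>k. zorbit T {\<omega>\<in>S. ULE_const (1 / (real k + 1)) (real k + 1) (H \<omega>)})" by blast
qed

end

text \<open>Ergodicity enters only here: the orbit of a ball around a support point is an invariant
  open set of positive measure, so its complement is null.\<close>

lemma ergodic_invariant_avoiding_ball_null:
  fixes T :: "'g::finite \<Rightarrow> 'a::metric_space \<Rightarrow> 'a"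
  assumes act: "zaction T" and borel: "sets \<mu> = sets borel" and erg: "ergodic_action \<mu> T"
    and tpow_cont: "\<And>n. continuous_on UNIV (tpow T n)"
    and inv: "\<And>x n. x \<in> D \<Longrightarrow> tpow T n x \<in> D"
    and \<omega>: "\<omega> \<in> msupp \<mu>" and \<delta>: "\<delta> > 0" and avoid: "D \<inter> ball \<omega> \<delta> = {}"
  shows "\<exists>Z\<in>null_sets \<mu>. D \<subseteq> Z"
proof -
  interpret zaction T by (rule act)
  define U where "U = (\<Union>n. tpow T n -` ball \<omega> \<delta>)"
  have space: "space \<mu> = UNIV" using sets_eq_imp_space_eq[OF borel] by simp
  have open_preimage: "open (tpow T n -` ball \<omega> \<delta>)" for n
    using continuous_open_preimage[OF tpow_cont open_UNIV open_ball] by simp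
  have "open U" unfolding U_def using open_preimage by blast
  then have U_sets: "U \<in> sets \<mu>" using borel by simp
  have "T i x \<in> U \<longleftrightarrow> x \<in> U" for i x
  proof -
    have "T i x \<in> U \<longleftrightarrow> (\<exists>n. tpow T (n + lattice_unit i) x \<in> ball \<omega> \<delta>)"
      unfolding U_def by (simp add: tpow_add tpow_lattice_unit[symmetric])
    also have "\<dots> \<longleftrightarrow> (\<exists>m. tpow T m x \<in> ball \<omega> \<delta>)"
    proof
      assume "\<exists>m. tpow T m x \<in> ball \<omega> \<delta>"
      then obtain m where "tpow T ((m - lattice_unit i) + lattice_unit i) x \<in> ball \<omega> \<delta>" by auto
      then show "\<exists>n. tpow T (n + lattice_unit i) x \<in> ball \<omega> \<delta>" by blast
    qed blast
    finally show ?thesis unfolding U_def by simp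
  qed
  then have "\<forall>i. T i -` U \<inter> space \<mu> = U" using space by auto
  then have "emeasure \<mu> U = 0 \<or> emeasure \<mu> (space \<mu> - U) = 0"
    using erg U_sets unfolding ergodic_action_def by blast
  moreover have "emeasure \<mu> U > 0"
  proof -
    have "emeasure \<mu> (ball \<omega> \<delta>) > 0" using \<omega> \<delta> unfolding msupp_def by blast
    also have "ball \<omega> \<delta> \<subseteq> U" unfolding U_def using tpow_zero by auto
    then have "emeasure \<mu> (ball \<omega> \<delta>) \<le> emeasure \<mu> U" by (rule emeasure_mono[OF _ U_sets])
    finally show ?thesis .
  qed
  ultimately have "space \<mu> - U \<in> null_sets \<mu>" using U_sets by auto
  moreover have "D \<subseteq> space \<mu> - U"
    using inv avoid unfolding U_def space by (auto simp: dist_commute)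
  ultimately show ?thesis by blast
qed

lemma ergodic_some_dense:
  fixes T :: "'g::finite \<Rightarrow> 'a::metric_space \<Rightarrow> 'a"
  assumes act: "zaction T" and borel: "sets \<mu> = sets borel" and erg: "ergodic_action \<mu> T"
    and tpow_cont: "\<And>n. continuous_on UNIV (tpow T n)"
    and inv: "\<And>k x n. x \<in> D k \<Longrightarrow> tpow T n x \<in> D k"
    and S: "S \<in> sets \<mu>" "emeasure \<mu> S > 0" "S \<subseteq> (\<Union>k::nat. D k)"
  shows "\<exists>k. msupp \<mu> \<subseteq> closure (D k)"
proof (rule ccontr)
  assume not_dense: "\<not> ?thesis"
  have "\<exists>Z. Z \<in> null_sets \<mu> \<and> D k \<subseteq> Z" for k
  proof -
    from not_dense obtain \<omega> where \<omega>: "\<omega> \<in> msupp \<mu>" "\<omega> \<notin> closure (D k)" by blast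
    then obtain \<delta> where \<delta>: "\<delta> > 0" "\<And>y. y \<in> D k \<Longrightarrow> \<not> dist y \<omega> < \<delta>"
      unfolding closure_approachable by auto
    have "D k \<inter> ball \<omega> \<delta> = {}"
    proof (intro equals0I)
      fix y assume "y \<in> D k \<inter> ball \<omega> \<delta>"
      with \<delta>(2)[of y] show False by (simp add: dist_commute)
    qed
    then show ?thesis
      using ergodic_invariant_avoiding_ball_null[OF act borel erg tpow_cont inv \<omega>(1) \<delta>(1)] by blast
  qed
  then obtain Z where Z: "\<And>k. Z k \<in> null_sets \<mu>" "\<And>k. D k \<subseteq> Z k" by metis
  have "(\<Union>k. Z k) \<in> null_sets \<mu>" using Z(1) by (rule null_sets_UN)
  moreover have "S \<subseteq> (\<Union>k. Z k)" using S(3) Z(2) by blast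
  ultimately have "S \<in> null_sets \<mu>" using S(1) null_sets_subset by blast
  then have "emeasure \<mu> S = 0" by (rule null_setsD1)
  with S(2) show False by simp
qed

lemma inv_cont_filter_imp_isCont:
  assumes "inv_cont_filter \<mu> T f"
  shows "isCont f x"
proof -
  obtain F :: "'a \<Rightarrow> 'a filter" where F: "\<forall>\<omega> A. eventually (\<lambda>x. x \<in> A) (F \<omega>) \<longrightarrow>
        (\<forall>\<delta>>0. outer_measure_of \<mu> (A \<inter> ball \<omega> \<delta>) > 0) \<and>
        (\<forall>s. (\<forall>k. s k \<in> A) \<and> s \<longlonglongrightarrow> \<omega> \<longrightarrow> (\<lambda>k. f (s k)) \<longlonglongrightarrow> f \<omega>) \<and>
        (\<forall>n. eventually (\<lambda>x. x \<in> tpow T n ` A) (F (tpow T n \<omega>)))"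
    using assms unfolding inv_cont_filter_def by blast
  \<comment> \<open>\<open>UNIV\<close> belongs to every filter, so condition (2) for \<open>A = UNIV\<close> is sequential continuity.\<close>
  have "eventually (\<lambda>y. y \<in> UNIV) (F x)" by simp
  with F have "\<forall>s. s \<longlonglongrightarrow> x \<longrightarrow> (\<lambda>k. f (s k)) \<longlonglongrightarrow> f x" by blast
  then show ?thesis
    unfolding continuous_at_sequentially comp_def by simp
qed

theorem theorem3p1:
  fixes \<mu> :: "('a::metric_space) measure"
    and T :: "'g::finite \<Rightarrow> 'a \<Rightarrow> 'a"
    and f :: "'a \<Rightarrow> real"
  assumes borel: "sets \<mu> = sets borel"
    and homeo: "\<forall>i. \<exists>g. homeomorphism UNIV UNIV (T i) g"
    and commute: "\<forall>i j. T i \<circ> T j = T j \<circ> T i"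
    and ergodic: "ergodic_action \<mu> T"
    and bdd: "bounded (range f)"
    and filt: "inv_cont_filter \<mu> T f"
    and ule: "\<exists>S\<in>sets \<mu>. emeasure \<mu> S > 0 \<and> (\<forall>\<omega>\<in>S. has_ULE (schr_op T f \<omega>))"
  shows "\<exists>\<alpha>>0. \<exists>C>0. \<forall>\<omega>\<in>msupp \<mu>. ULE_const \<alpha> C (schr_op T f \<omega>)"
proof -
  from homeo obtain g where homeo_g: "\<And>i. homeomorphism UNIV UNIV (T i) (g i)" by metis
  interpret zaction T by (rule zaction_of_homeomorphisms[OF homeo_g commute])
  have tpow_cont: "continuous_on UNIV (tpow T n)" for n by (rule continuous_on_tpow[OF homeo_g])
  from ule obtain S where S: "S \<in> sets \<mu>" "emeasure \<mu> S > 0" "\<And>\<omega>. \<omega> \<in> S \<Longrightarrow> has_ULE (schr_op T f \<omega>)"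
    by blast
  define D where "D k = zorbit T {\<omega>\<in>S. ULE_const (1 / (real k + 1)) (real k + 1) (schr_op T f \<omega>)}"
    for k :: nat
  have D_inv: "x \<in> D k \<Longrightarrow> tpow T n x \<in> D k" for k x n
    unfolding D_def by (rule tpow_in_zorbit)
  have "S \<subseteq> (\<Union>k. D k)"
    unfolding D_def by (rule has_ULE_subset_UN_zorbit) (rule S(3))
  from ergodic_some_dense[OF zaction_axioms borel ergodic tpow_cont D_inv S(1,2) this]
  obtain k where dense: "msupp \<mu> \<subseteq> closure (D k)" ..
  have ULE_on_support: "ULE_const (1 / (real k + 1)) (real k + 1) (schr_op T f \<omega>)" if "\<omega> \<in> msupp \<mu>" for \<omega>
  proof (rule ULE_const_closure[OF _ _ tpow_cont inv_cont_filter_imp_isCont[OF filt]])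
    show "x \<in> D k \<Longrightarrow> ULE_const (1 / (real k + 1)) (real k + 1) (schr_op T f x)" for x
      unfolding D_def by (rule ULE_const_zorbit) auto
    show "\<omega> \<in> closure (D k)" using that dense by blast
  qed simp_all
  moreover have "1 / (real k + 1) > 0" "real k + 1 > 0" by simp_all
  ultimately show ?thesis by blast
qed

end
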